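(* Let $b$ be a connected transient graph over a countable set $X$ satisfying the ellipticity condition (E) for some $E>0$, and suppose the Green's function is proper. Fix $o\in X$, a metric $\varrho$ on $X$, and write $\|x\|=\varrho(x,o)$. Assume there are constants $C>0$ and $p>0$ with $$w_G(x)\le \frac{C}{1+\|x\|^p}\qquad\text{for all }x\in X.$$ Let $\tilde w:X\to(0,\infty)$ be such that for some $\lambda>0$ and some finite set $K\subseteq X$, $$\tilde w(x)\ge (1+\lambda)\frac{C}{1+\|x\|^p}\qquad\text{for all }x\in X\setminus K.$$ Then $\tilde w$ is not a Hardy weight.
   Context: A graph over a countable set $X$ is a symmetric map $b:X\times X\to[0,\infty)$ with zero diagonal; write $x\sim y$ if $b(x,y)>0$. It is connected if any two vertices are joined by a finite path $x=x_0\sim x_1\sim\dots\sim x_n=y$. Ellipticity condition (E): $b(x,y)\ge E\sum_{z\in X}b(x,z)$ for all $x\sim y$. Define $Lf(x)=\sum_{y}b(x,y)(f(x)-f(y))$ and, for $f$ with finite support, $Q(f)=\sum_{x,y\in X}b(x,y)(f(x)-f(y))^2$. Let $L$ also denote the Friedrichs extension of $L|_{C_c(X)}$ in $\ell^2(X)$. The Green's function is $G(x,y)=\lim_{\alpha\downarrow 0}((L+\alpha)^{-1}1_x)(y)\in[0,\infty]$; the graph is transient if it is finite. Write $G(x)=G(o,x)$. $G$ is proper if for every $\varepsilon>0$ the set $\{x: G(x)\ge\varepsilon\}$ is finite. The weight $w_G$ is defined by $w_G(x)=2\,(L G^{1/2})(x)/G(x)^{1/2}$, equivalently $w_G(x)=\frac{1_{\{o\}}(x)}{G(o)}+\frac{1}{G(x)}\sum_{y}b(x,y)\big(G(x)^{1/2}-G(y)^{1/2}\big)^2$.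 A function $w:X\to[0,\infty)$ is a Hardy weight if $Q(f)\ge\sum_{x}w(x)f(x)^2$ for all finitely supported $f:X\to\mathbb R$. *)

theory Defs
  imports "HOL-Analysis.Analysis"
begin

definition graph :: "('a \<Rightarrow> 'a \<Rightarrow> real) \<Rightarrow> bool" where
  "graph b \<longleftrightarrow> (\<forall>x y. b x y \<ge> 0 \<and> b x y = b y x) \<and> (\<forall>x. b x x = 0)"

definition connected_graph :: "('a \<Rightarrow> 'a \<Rightarrow> real) \<Rightarrow> bool" where
  "connected_graph b \<longleftrightarrow> (\<forall>x y. (\<lambda>u v. b u v > 0)\<^sup>*\<^sup>* x y)"

text \<open>Ellipticity (E): b(x,y) >= E * sum_z b(x,z) for x ~ y (the sum being finite,
  as it must be for the inequality to hold in [0,\<infinity>]).\<close>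
definition ellipticity :: "('a \<Rightarrow> 'a \<Rightarrow> real) \<Rightarrow> real \<Rightarrow> bool" where
  "ellipticity b E \<longleftrightarrow> (\<forall>x y. b x y > 0 \<longrightarrow>
      (b x) summable_on UNIV \<and> b x y \<ge> E * (\<Sum>\<^sub>\<infinity>z. b x z))"

definition fin_supp :: "('a \<Rightarrow> real) \<Rightarrow> bool" where
  "fin_supp f \<longleftrightarrow> finite {x. f x \<noteq> 0}"

definition energy :: "('a \<Rightarrow> 'a \<Rightarrow> real) \<Rightarrow> ('a \<Rightarrow> real) \<Rightarrow> real" where
  "energy b f = (\<Sum>\<^sub>\<infinity>(x,y). b x y * (f x - f y)^2)"

definition energy_summable :: "('a \<Rightarrow> 'a \<Rightarrow> real) \<Rightarrow> ('a \<Rightarrow> real) \<Rightarrow> bool" where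
  "energy_summable b f \<longleftrightarrow> (\<lambda>(x,y). b x y * (f x - f y)^2) summable_on UNIV"

definition energy_bil :: "('a \<Rightarrow> 'a \<Rightarrow> real) \<Rightarrow> ('a \<Rightarrow> real) \<Rightarrow> ('a \<Rightarrow> real) \<Rightarrow> real" where
  "energy_bil b f g = (\<Sum>\<^sub>\<infinity>(x,y). b x y * (f x - f y) * (g x - g y))"

definition in_l2 :: "('a \<Rightarrow> real) \<Rightarrow> bool" where
  "in_l2 f \<longleftrightarrow> (\<lambda>x. (f x)^2) summable_on UNIV"

definition l2sq :: "('a \<Rightarrow> real) \<Rightarrow> real" where
  "l2sq f = (\<Sum>\<^sub>\<infinity>x. (f x)^2)"

text \<open>Form domain of the Friedrichs extension of L on C_c(X): the closure of the finitely
  supported functions in l^2 with respect to the norm (q(u) + \<parallel>u\<parallel>^2)^(1/2), q = Q/2.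
  (The closed form agrees with the formal energy on this domain.)\<close>
definition form_domain :: "('a \<Rightarrow> 'a \<Rightarrow> real) \<Rightarrow> ('a \<Rightarrow> real) set" where
  "form_domain b = {u. in_l2 u \<and> energy_summable b u \<and>
     (\<forall>\<epsilon>::real. \<epsilon> > 0 \<longrightarrow> (\<exists>\<phi>. fin_supp \<phi> \<and> energy_summable b (\<lambda>x. u x - \<phi> x) \<and>
        energy b (\<lambda>x. u x - \<phi> x) / 2 + l2sq (\<lambda>x. u x - \<phi> x) < \<epsilon>))}"

text \<open>((L+\<alpha>)^{-1} 1_{x0}) for the Friedrichs extension L, given by the weak equation
  q(u,\<phi>) + \<alpha> <u,\<phi>> = <1_{x0},\<phi>> for all \<phi> in C_c(X), u in the form domain,
  where q(f,g) = (1/2) sum_{x,y} b(x,y)(f x - f y)(g x - g y) is the form of L.\<close>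
definition resolvent :: "('a \<Rightarrow> 'a \<Rightarrow> real) \<Rightarrow> real \<Rightarrow> 'a \<Rightarrow> ('a \<Rightarrow> real)" where
  "resolvent b \<alpha> x0 = (THE u. u \<in> form_domain b \<and>
     (\<forall>\<phi>. fin_supp \<phi> \<longrightarrow> energy_bil b u \<phi> / 2 + \<alpha> * (\<Sum>\<^sub>\<infinity>y. u y * \<phi> y) = \<phi> x0))"

definition green :: "('a \<Rightarrow> 'a \<Rightarrow> real) \<Rightarrow> 'a \<Rightarrow> 'a \<Rightarrow> ereal" where
  "green b x y = Lim (at_right 0) (\<lambda>\<alpha>. ereal (resolvent b \<alpha> x y))"

definition transient :: "('a \<Rightarrow> 'a \<Rightarrow> real) \<Rightarrow> bool" where
  "transient b \<longleftrightarrow> (\<forall>x y. green b x y < \<infinity>)"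

definition green_proper :: "('a \<Rightarrow> 'a \<Rightarrow> real) \<Rightarrow> 'a \<Rightarrow> bool" where
  "green_proper b x0 \<longleftrightarrow> (\<forall>\<epsilon>::real. \<epsilon> > 0 \<longrightarrow> finite {x. green b x0 x \<ge> ereal \<epsilon>})"

definition lap :: "('a \<Rightarrow> 'a \<Rightarrow> real) \<Rightarrow> ('a \<Rightarrow> real) \<Rightarrow> 'a \<Rightarrow> real" where
  "lap b f x = (\<Sum>\<^sub>\<infinity>y. b x y * (f x - f y))"

definition wG :: "('a \<Rightarrow> 'a \<Rightarrow> real) \<Rightarrow> 'a \<Rightarrow> 'a \<Rightarrow> real" where
  "wG b x0 x = 2 * lap b (\<lambda>y. sqrt (real_of_ereal (green b x0 y))) x
              / sqrt (real_of_ereal (green b x0 x))"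

definition hardy_weight :: "('a \<Rightarrow> 'a \<Rightarrow> real) \<Rightarrow> ('a \<Rightarrow> real) \<Rightarrow> bool" where
  "hardy_weight b w \<longleftrightarrow> (\<forall>x. w x \<ge> 0) \<and>
     (\<forall>f. fin_supp f \<longrightarrow> (\<Sum>\<^sub>\<infinity>x. w x * (f x)^2) \<le> energy b f)"

definition is_metric :: "('a \<Rightarrow> 'a \<Rightarrow> real) \<Rightarrow> bool" where
  "is_metric \<rho> \<longleftrightarrow> (\<forall>x y. \<rho> x y = 0 \<longleftrightarrow> x = y) \<and> (\<forall>x y. \<rho> x y = \<rho> y x)
     \<and> (\<forall>x y z. \<rho> x z \<le> \<rho> x y + \<rho> y z)"

end

theory Submission
  imports Defs
begin

text \<open>
  Let \<open>G\<close> be the Green function of \<open>x0\<close> and \<open>W = w\<^sub>G G\<close>. The ground state representation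
  writes \<open>Q(\<surd>G \<psi>)\<close> as \<open>\<Sum>\<^sub>x W(x) \<psi>(x)\<^sup>2\<close> plus
  \<open>\<Sum>\<^sub>x\<^sub>,\<^sub>y b(x,y) \<surd>(G(x) G(y)) (\<psi>(x) - \<psi>(y))\<^sup>2\<close>. Test it with the cutoff \<open>\<psi>\<^sub>T\<close> of \<open>ln G\<close>
  that is \<open>1\<close> on \<open>{G \<ge> e\<^sup>-\<^sup>T}\<close>, \<open>0\<close> off \<open>{G \<ge> e\<^sup>-\<^sup>2\<^sup>T}\<close> and affine in \<open>ln G\<close> in between.
  Since \<open>G\<close> is harmonic off \<open>x0\<close>, its flux out of every finite level set \<open>{G \<ge> t}\<close> is \<open>1\<close>;
  with the Harnack inequality \<open>E G(y) \<le> G(x)\<close> along edges, which ellipticity provides, this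
  pins the logarithmic energy of \<open>{G \<ge> t}\<close> to \<open>2 ln (G(x0) / t)\<close> up to \<open>O(1)\<close>. Hence the first
  term grows linearly in \<open>T\<close> while the second is \<open>O(1/T)\<close>, whereas a Hardy weight with
  \<open>w \<ge> (1 + \<lambda>) w\<^sub>G\<close> off a finite set would bound \<open>\<lambda>\<close> times the first term.
\<close>

lemma ln_diff_le_diff_div:
  fixes a c :: real
  assumes "0 < c" "c \<le> a"
  shows "ln a - ln c \<le> (a - c) / c"
proof -
  have "ln (a / c) \<le> a / c - 1" using assms by (intro ln_le_minus_one) simp
  then show ?thesis using assms by (simp add: ln_div diff_divide_distrib)
qed

lemma diff_mult_ln_diff_nonneg:
  fixes a c :: real
  assumes "0 < a" "0 < c"
  shows "0 \<le> (a - c) * (ln a - ln c)"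
  using assms by (cases "c \<le> a") (auto intro: mult_nonneg_nonneg mult_nonpos_nonpos)

lemma diff_mult_ln_diff_le_sqrt_diff_sq:
  fixes a c E :: real
  assumes "0 < a" "0 < c" "0 < E" "E * a \<le> c" "E * c \<le> a"
  shows "(a - c) * (ln a - ln c) \<le> 4 / E * (sqrt a - sqrt c)^2"
proof -
  have ordered: "(a - c) * (ln a - ln c) \<le> 4 / E * (sqrt a - sqrt c)^2"
    if c: "0 < c" "c \<le> a" and Ea: "E * a \<le> c" for a c :: real
  proof -
    have "(a - c) * (ln a - ln c) \<le> (a - c) * ((a - c) / c)"
      using ln_diff_le_diff_div[OF c] c by (intro mult_left_mono) auto
    also have "\<dots> = (sqrt a - sqrt c)^2 * ((sqrt a + sqrt c)^2 / c)"
      using c by (simp add: power2_eq_square algebra_simps)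
    also have "\<dots> \<le> (sqrt a - sqrt c)^2 * (4 / E)"
    proof (intro mult_left_mono)
      have "(sqrt a + sqrt c)^2 \<le> (2 * sqrt a)^2"
        using c by (intro power_mono) auto
      also have "\<dots> = 4 * a" using c by (simp add: power_mult_distrib)
      finally have "E * (sqrt a + sqrt c)^2 \<le> E * (4 * a)"
        using \<open>0 < E\<close> by (intro mult_left_mono) auto
      then have "E * (sqrt a + sqrt c)^2 \<le> 4 * c" using Ea by linarith
      then show "(sqrt a + sqrt c)^2 / c \<le> 4 / E"
        using c \<open>0 < E\<close> by (simp add: field_simps)
    qed simp
    finally show ?thesis by (simp add: mult.commute)
  qed
  show ?thesis
  proof (cases "c \<le> a")
    case True
    then show ?thesis using ordered assms by blast
  next
    case False
    then have "(c - a) * (ln c - ln a) \<le> 4 / E * (sqrt c - sqrt a)^2"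
      using ordered[of a c] assms by simp
    then show ?thesis by (simp add: algebra_simps power2_commute)
  qed
qed

lemma sqrt_mult_ln_diff_sq_le:
  fixes a c E :: real
  assumes "0 < a" "0 < c" "0 < E" "E * a \<le> c" "E * c \<le> a"
  shows "sqrt (a * c) * (ln a - ln c)^2 \<le> 1 / E * ((a - c) * (ln a - ln c))"
proof -
  have ordered: "sqrt (a * c) * (ln a - ln c)^2 \<le> 1 / E * ((a - c) * (ln a - ln c))"
    if c: "0 < c" "c \<le> a" and Ea: "E * a \<le> c" for a c :: real
  proof -
    have l0: "0 \<le> ln a - ln c" using c by simp
    have "sqrt (a * c) \<le> sqrt (a * a)" using c by (intro real_sqrt_le_mono mult_left_mono) auto
    then have sa: "sqrt (a * c) \<le> a" using c by simp
    have "sqrt (a * c) * (ln a - ln c)^2 = sqrt (a * c) * (ln a - ln c) * (ln a - ln c)"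
      by (simp add: power2_eq_square)
    also have "\<dots> \<le> a * ((a - c) / c) * (ln a - ln c)"
      using sa ln_diff_le_diff_div[OF c] l0 c
      by (intro mult_right_mono mult_mono) auto
    also have "\<dots> = a / c * ((a - c) * (ln a - ln c))" by simp
    also have "\<dots> \<le> 1 / E * ((a - c) * (ln a - ln c))"
      using c Ea \<open>0 < E\<close> diff_mult_ln_diff_nonneg[of a c]
      by (intro mult_right_mono) (auto simp: field_simps)
    finally show ?thesis .
  qed
  show ?thesis
  proof (cases "c \<le> a")
    case True
    then show ?thesis using ordered assms by blast
  next
    case False
    then have "sqrt (c * a) * (ln c - ln a)^2 \<le> 1 / E * ((c - a) * (ln c - ln a))"
      using ordered[of a c] assms by simp
    then show ?thesis by (simp add: algebra_simps power2_commute)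
  qed
qed

lemma abs_clamp_diff_le:
  fixes a c :: real
  shows "\<bar>max 0 (min 1 a) - max 0 (min 1 c)\<bar> \<le> \<bar>a - c\<bar>"
  by (simp add: max_def min_def abs_if)

lemma add_mult_div_square_le:
  fixes a c T :: real
  assumes "0 \<le> a" "1 \<le> T"
  shows "(c + a * T) / T^2 \<le> \<bar>c\<bar> + a"
proof -
  have "c / T^2 \<le> \<bar>c\<bar> / T^2" using assms(2) by (intro divide_right_mono) auto
  also have "\<dots> \<le> \<bar>c\<bar>"
  proof -
    have "1 \<le> T^2" using assms(2) by (simp add: one_le_power)
    then have "\<bar>c\<bar> \<le> \<bar>c\<bar> * T^2" using mult_left_mono[of 1 "T^2" "\<bar>c\<bar>"] by simp
    then show ?thesis using \<open>1 \<le> T^2\<close> by (simp add: divide_le_eq)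
  qed
  finally have "c / T^2 \<le> \<bar>c\<bar>" .
  moreover have "a * T / T^2 \<le> a"
    using assms mult_left_mono[of 1 T a] by (simp add: power2_eq_square divide_le_eq)
  ultimately show ?thesis by (simp add: add_divide_distrib)
qed

lemma infsum_finite_support:
  assumes "finite B" "\<And>x. x \<notin> B \<Longrightarrow> f x = 0"
  shows "infsum f UNIV = sum f B"
  using assms by (intro infsumI has_sum_finite_neutralI) auto

lemma summable_on_finite_support:
  assumes "finite B" "\<And>x. x \<notin> B \<Longrightarrow> f x = 0"
  shows "f summable_on UNIV"
  using assms by (intro has_sum_imp_summable[OF has_sum_finite_neutralI]) auto

lemma summable_on_diff:
  fixes f g :: "'i \<Rightarrow> 'b::{topological_ab_group_add, t2_space}"
  assumes "f summable_on A" "g summable_on A"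
  shows "(\<lambda>x. f x - g x) summable_on A"
  using summable_on_add[OF assms(1) summable_on_uminus[THEN iffD2, OF assms(2)]] by simp

lemma infsum_diff:
  fixes f g :: "'i \<Rightarrow> 'b::{topological_ab_group_add, t2_space}"
  assumes "f summable_on A" "g summable_on A"
  shows "infsum (\<lambda>x. f x - g x) A = infsum f A - infsum g A"
  using infsum_add[OF assms(1) summable_on_uminus[THEN iffD2, OF assms(2)]] infsum_uminus[of g A] by simp

lemma weighted_prod_summable_on:
  fixes c u v :: "'i \<Rightarrow> real"
  assumes u: "(\<lambda>i. c i * (u i)^2) summable_on A" and v: "(\<lambda>i. c i * (v i)^2) summable_on A"
    and c: "\<And>i. 0 \<le> c i"
  shows "(\<lambda>i. c i * u i * v i) summable_on A"
proof -
  have bound: "norm (c i * u i * v i) \<le> c i * (u i)^2 + c i * (v i)^2" for i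
  proof -
    have "2 * \<bar>u i * v i\<bar> \<le> (u i)^2 + (v i)^2"
      using sum_squares_bound[of "\<bar>u i\<bar>" "\<bar>v i\<bar>"] by (simp add: abs_mult)
    then have "\<bar>u i * v i\<bar> \<le> (u i)^2 + (v i)^2" by simp
    then have "c i * \<bar>u i * v i\<bar> \<le> c i * ((u i)^2 + (v i)^2)"
      using c[of i] by (rule mult_left_mono)
    then show ?thesis using c[of i] by (simp add: abs_mult distrib_left mult.assoc)
  qed
  have "(\<lambda>i. norm (c i * u i * v i)) summable_on A"
    by (rule summable_on_comparison_test[OF summable_on_add[OF u v] bound]) simp
  then show ?thesis by (rule abs_summable_summable)
qed

lemma
  fixes c u v :: "'i \<Rightarrow> real"
  assumes u: "(\<lambda>i. c i * (u i)^2) summable_on A" and v: "(\<lambda>i. c i * (v i)^2) summable_on A"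
    and c: "\<And>i. 0 \<le> c i"
  shows weighted_sq_diff_summable_on: "(\<lambda>i. c i * (u i - v i)^2) summable_on A"
    and infsum_weighted_sq_diff: "(\<Sum>\<^sub>\<infinity>i\<in>A. c i * (u i - v i)^2)
      = (\<Sum>\<^sub>\<infinity>i\<in>A. c i * (u i)^2) - 2 * (\<Sum>\<^sub>\<infinity>i\<in>A. c i * u i * v i) + (\<Sum>\<^sub>\<infinity>i\<in>A. c i * (v i)^2)"
    and infsum_weighted_sq_diff_le: "(\<Sum>\<^sub>\<infinity>i\<in>A. c i * (u i - v i)^2)
      \<le> 2 * (\<Sum>\<^sub>\<infinity>i\<in>A. c i * (u i)^2) + 2 * (\<Sum>\<^sub>\<infinity>i\<in>A. c i * (v i)^2)"
proof -
  have uv: "(\<lambda>i. 2 * (c i * u i * v i)) summable_on A"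
    by (intro summable_on_cmult_right weighted_prod_summable_on[OF u v c])
  have minus: "(\<lambda>i. c i * (u i)^2 - 2 * (c i * u i * v i)) summable_on A"
    by (rule summable_on_diff[OF u uv])
  have plus: "(\<lambda>i. c i * (u i)^2 + 2 * (c i * u i * v i)) summable_on A"
    by (rule summable_on_add[OF u uv])
  have eq_minus: "c i * (u i - v i)^2 = (c i * (u i)^2 - 2 * (c i * u i * v i)) + c i * (v i)^2" for i
    by (simp add: power2_eq_square algebra_simps)
  have eq_plus: "c i * (u i + v i)^2 = (c i * (u i)^2 + 2 * (c i * u i * v i)) + c i * (v i)^2" for i
    by (simp add: power2_eq_square algebra_simps)
  have uv_sum: "(\<Sum>\<^sub>\<infinity>i\<in>A. 2 * (c i * u i * v i)) = 2 * (\<Sum>\<^sub>\<infinity>i\<in>A. c i * u i * v i)"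
    by (rule infsum_cmult_right) (rule weighted_prod_summable_on[OF u v c])
  show "(\<lambda>i. c i * (u i - v i)^2) summable_on A"
    unfolding eq_minus by (rule summable_on_add[OF minus v])
  show expand: "(\<Sum>\<^sub>\<infinity>i\<in>A. c i * (u i - v i)^2)
      = (\<Sum>\<^sub>\<infinity>i\<in>A. c i * (u i)^2) - 2 * (\<Sum>\<^sub>\<infinity>i\<in>A. c i * u i * v i) + (\<Sum>\<^sub>\<infinity>i\<in>A. c i * (v i)^2)"
    unfolding eq_minus by (simp add: infsum_add[OF minus v] infsum_diff[OF u uv] uv_sum)
  have "(\<Sum>\<^sub>\<infinity>i\<in>A. c i * (u i + v i)^2)
      = (\<Sum>\<^sub>\<infinity>i\<in>A. c i * (u i)^2) + 2 * (\<Sum>\<^sub>\<infinity>i\<in>A. c i * u i * v i) + (\<Sum>\<^sub>\<infinity>i\<in>A. c i * (v i)^2)"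
    unfolding eq_plus by (simp add: infsum_add[OF plus v] infsum_add[OF u uv] uv_sum)
  moreover have "0 \<le> (\<Sum>\<^sub>\<infinity>i\<in>A. c i * (u i + v i)^2)" using c by (intro infsum_nonneg) simp
  ultimately show "(\<Sum>\<^sub>\<infinity>i\<in>A. c i * (u i - v i)^2)
      \<le> 2 * (\<Sum>\<^sub>\<infinity>i\<in>A. c i * (u i)^2) + 2 * (\<Sum>\<^sub>\<infinity>i\<in>A. c i * (v i)^2)"
    unfolding expand by simp
qed

lemma infsum_pair_le_of_finite_sums_le:
  fixes f :: "'i \<Rightarrow> real" and g :: "'j \<Rightarrow> real"
  assumes "\<And>x. 0 \<le> f x" "\<And>y. 0 \<le> g y" "0 < c" "0 < d"
    and bound: "\<And>F H. finite F \<Longrightarrow> finite H \<Longrightarrow> c * sum f F + d * sum g H \<le> B"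
  shows "f summable_on UNIV" "g summable_on UNIV" "c * infsum f UNIV + d * infsum g UNIV \<le> B"
proof -
  show f: "f summable_on UNIV"
    using assms bound[of _ "{}"]
    by (intro nonneg_bdd_above_summable_on bdd_aboveI[where M = "B / c"]) (auto simp: field_simps)
  show g: "g summable_on UNIV"
    using assms bound[of "{}"]
    by (intro nonneg_bdd_above_summable_on bdd_aboveI[where M = "B / d"]) (auto simp: field_simps)
  have "infsum f UNIV \<le> (B - d * sum g H) / c" if "finite H" for H
    using assms bound[OF _ that] by (intro infsum_le_finite_sums[OF f]) (auto simp: field_simps)
  then have "sum g H \<le> (B - c * infsum f UNIV) / d" if "finite H" for H
    using that assms by (simp add: field_simps)
  then have "infsum g UNIV \<le> (B - c * infsum f UNIV) / d"
    by (intro infsum_le_finite_sums[OF g]) auto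
  then show "c * infsum f UNIV + d * infsum g UNIV \<le> B" using assms by (simp add: field_simps)
qed

section \<open>Elliptic graphs\<close>

locale elliptic_graph =
  fixes b :: "'a \<Rightarrow> 'a \<Rightarrow> real" and E :: real
  assumes graph: "graph b" and E_pos: "0 < E" and elliptic: "ellipticity b E"
begin

definition nbrs :: "'a \<Rightarrow> 'a set" where
  "nbrs x = {y. 0 < b x y}"

definition deg :: "'a \<Rightarrow> real" where
  "deg x = sum (b x) (nbrs x)"

definition lapl :: "('a \<Rightarrow> real) \<Rightarrow> 'a \<Rightarrow> real" where
  "lapl f x = (\<Sum>y\<in>nbrs x. b x y * (f x - f y))"

definition closed_nbhd :: "'a set \<Rightarrow> 'a set" where
  "closed_nbhd S = S \<union> (\<Union>x\<in>S. nbrs x)"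

lemma b_nonneg: "0 \<le> b x y"
  using graph by (auto simp: graph_def)

lemma b_sym: "b x y = b y x"
  using graph by (auto simp: graph_def)

lemma mem_nbrs_iff: "y \<in> nbrs x \<longleftrightarrow> b x y \<noteq> 0"
  using b_nonneg[of x y] by (auto simp: nbrs_def)

lemma mem_nbrs_sym: "y \<in> nbrs x \<longleftrightarrow> x \<in> nbrs y"
  by (auto simp: nbrs_def b_sym)

lemma b_eq_0_if_not_nbr: "y \<notin> nbrs x \<Longrightarrow> b x y = 0"
  using mem_nbrs_iff by blast

text \<open>Ellipticity bounds the number of neighbours by 1/E.\<close>

lemma finite_nbrs: "finite (nbrs x)"
proof (cases "nbrs x = {}")
  case False
  then obtain y0 where y0: "0 < b x y0" by (auto simp: nbrs_def)
  then have sm: "b x summable_on UNIV" and ell: "\<And>y. 0 < b x y \<Longrightarrow> E * (\<Sum>\<^sub>\<infinity>z. b x z) \<le> b x y"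
    using elliptic by (auto simp: ellipticity_def)
  define D where "D = (\<Sum>\<^sub>\<infinity>z. b x z)"
  have sum_le_D: "sum (b x) F \<le> D" if "finite F" for F
    unfolding D_def using that by (intro finite_sum_le_infsum[OF sm]) (auto simp: b_nonneg)
  have D_pos: "0 < D" using sum_le_D[of "{y0}"] y0 by simp
  have "card F \<le> nat \<lfloor>1 / E\<rfloor>" if "F \<subseteq> nbrs x" "finite F" for F
  proof -
    have "real (card F) * (E * D) = (\<Sum>y\<in>F. E * D)" by simp
    also have "\<dots> \<le> sum (b x) F"
      using that ell by (intro sum_mono) (auto simp: nbrs_def D_def)
    also have "\<dots> \<le> D" by (rule sum_le_D[OF that(2)])
    finally have "real (card F) * E \<le> 1" using D_pos
      by (metis mult.assoc mult_le_cancel_right2)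
    then show ?thesis using E_pos by (intro le_nat_floor) (simp add: field_simps)
  qed
  then show ?thesis using finite_if_finite_subsets_card_bdd by blast
qed simp

lemma infsum_b_eq_deg: "(\<Sum>\<^sub>\<infinity>y. b x y) = deg x"
  unfolding deg_def by (rule infsum_finite_support[OF finite_nbrs]) (simp add: b_eq_0_if_not_nbr)

lemma E_deg_le_b: "0 < b x y \<Longrightarrow> E * deg x \<le> b x y"
  using elliptic by (auto simp: ellipticity_def infsum_b_eq_deg)

lemma deg_nonneg: "0 \<le> deg x"
  unfolding deg_def by (intro sum_nonneg b_nonneg)

lemma b_le_deg: "b x y \<le> deg x"
proof (cases "0 < b x y")
  case True
  then show ?thesis
    unfolding deg_def using finite_nbrs b_nonneg by (intro member_le_sum) (auto simp: nbrs_def)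
next
  case False
  then show ?thesis using b_nonneg[of x y] deg_nonneg[of x] by simp
qed

lemma E_le_1:
  assumes "0 < b x y"
  shows "E \<le> 1"
proof -
  have "0 < deg x" using b_le_deg[of x y] assms by linarith
  moreover have "E * deg x \<le> 1 * deg x" using E_deg_le_b[OF assms] b_le_deg[of x y] by linarith
  ultimately show ?thesis by simp
qed

lemma finite_closed_nbhd: "finite S \<Longrightarrow> finite (closed_nbhd S)"
  unfolding closed_nbhd_def using finite_nbrs by auto

lemma subset_closed_nbhd: "S \<subseteq> closed_nbhd S"
  and nbrs_subset_closed_nbhd: "x \<in> S \<Longrightarrow> nbrs x \<subseteq> closed_nbhd S"
  unfolding closed_nbhd_def by auto

lemma lap_eq_lapl: "lap b f x = lapl f x"
  unfolding lap_def lapl_def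
  by (rule infsum_finite_support[OF finite_nbrs]) (simp add: b_eq_0_if_not_nbr)

lemma lapl_eq_deg: "lapl f x = deg x * f x - (\<Sum>y\<in>nbrs x. b x y * f y)"
  unfolding lapl_def deg_def by (simp add: right_diff_distrib sum_subtractf sum_distrib_right)

lemma lapl_diff: "lapl (\<lambda>x. u x - v x) x = lapl u x - lapl v x"
  unfolding lapl_def sum_subtractf[symmetric] by (rule sum.cong) (auto simp: algebra_simps)

lemma sum_b_diff_eq_lapl:
  assumes "finite A" "nbrs x \<subseteq> A"
  shows "(\<Sum>y\<in>A. b x y * (f x - f y)) = lapl f x"
  unfolding lapl_def by (rule sum.mono_neutral_right) (use assms b_eq_0_if_not_nbr in auto)

lemma sum_b_diff_eq_lapl_minus_outflow:
  assumes "finite A"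
  shows "(\<Sum>y\<in>A. b x y * (f x - f y)) = lapl f x - (\<Sum>y\<in>nbrs x - A. b x y * (f x - f y))"
proof -
  have "(\<Sum>y\<in>A. b x y * (f x - f y)) = (\<Sum>y\<in>nbrs x \<inter> A. b x y * (f x - f y))"
    by (rule sum.mono_neutral_right) (use assms b_eq_0_if_not_nbr in auto)
  moreover have "lapl f x = (\<Sum>y\<in>nbrs x \<inter> A. b x y * (f x - f y))
      + (\<Sum>y\<in>nbrs x - A. b x y * (f x - f y))"
    unfolding lapl_def by (rule sum.Int_Diff[OF finite_nbrs])
  ultimately show ?thesis by simp
qed

lemma double_sum_b_swap:
  "(\<Sum>x\<in>A. \<Sum>y\<in>A. b x y * g x y) = (\<Sum>x\<in>A. \<Sum>y\<in>A. b x y * g y x)"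
  by (subst sum.swap) (simp add: b_sym)

lemma double_sum_b_diff_eq_0: "(\<Sum>x\<in>A. \<Sum>y\<in>A. b x y * (g x - g y)) = 0"
proof -
  have "(\<Sum>x\<in>A. \<Sum>y\<in>A. b x y * (g x - g y)) = (\<Sum>x\<in>A. \<Sum>y\<in>A. b x y * (g y - g x))"
    by (rule double_sum_b_swap)
  also have "\<dots> = - (\<Sum>x\<in>A. \<Sum>y\<in>A. b x y * (g x - g y))"
    by (simp add: algebra_simps sum_negf[symmetric])
  finally show ?thesis by simp
qed

lemma double_sum_b_diff_mult_diff:
  "(\<Sum>x\<in>A. \<Sum>y\<in>A. b x y * (g x - g y) * (h x - h y))
     = 2 * (\<Sum>x\<in>A. h x * (\<Sum>y\<in>A. b x y * (g x - g y)))"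
proof -
  have "(\<Sum>x\<in>A. \<Sum>y\<in>A. b x y * (g x - g y) * (h x - h y))
      = (\<Sum>x\<in>A. \<Sum>y\<in>A. b x y * ((g x - g y) * h x)) + (\<Sum>x\<in>A. \<Sum>y\<in>A. b x y * ((g y - g x) * h y))"
    by (simp add: algebra_simps sum.distrib sum_subtractf)
  also have "(\<Sum>x\<in>A. \<Sum>y\<in>A. b x y * ((g y - g x) * h y))
           = (\<Sum>x\<in>A. \<Sum>y\<in>A. b x y * ((g x - g y) * h x))"
    by (rule double_sum_b_swap[symmetric])
  finally show ?thesis by (simp add: sum_distrib_left algebra_simps)
qed

lemma
  assumes "finite S" and supp: "\<And>x y. t x y \<noteq> 0 \<Longrightarrow> b x y \<noteq> 0 \<and> (x \<in> S \<or> y \<in> S)"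
  shows infsum_edges_eq_double_sum:
      "(\<Sum>\<^sub>\<infinity>(x,y). t x y) = (\<Sum>x\<in>closed_nbhd S. \<Sum>y\<in>closed_nbhd S. t x y)"
    and summable_on_edges: "(\<lambda>(x,y). t x y) summable_on UNIV"
proof -
  let ?N = "closed_nbhd S"
  have zero: "(\<lambda>(x,y). t x y) p = 0" if "p \<notin> ?N \<times> ?N" for p
    using that supp[of "fst p" "snd p"] mem_nbrs_iff mem_nbrs_sym subset_closed_nbhd
      nbrs_subset_closed_nbhd
    by (cases p) (auto split: prod.splits, blast+)
  have fin: "finite (?N \<times> ?N)" using finite_closed_nbhd[OF \<open>finite S\<close>] by simp
  show "(\<Sum>\<^sub>\<infinity>(x,y). t x y) = (\<Sum>x\<in>?N. \<Sum>y\<in>?N. t x y)"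
    using infsum_finite_support[OF fin zero] by (simp add: sum.cartesian_product)
  show "(\<lambda>(x,y). t x y) summable_on UNIV"
    by (rule summable_on_finite_support[OF fin zero])
qed

lemma
  assumes S: "finite S" "\<And>x. \<phi> x \<noteq> 0 \<Longrightarrow> x \<in> S"
  shows energy_bil_finite_support: "energy_bil b u \<phi> = 2 * (\<Sum>x\<in>S. \<phi> x * lapl u x)"
    and summable_on_energy_bil_finite_support:
      "(\<lambda>(x,y). b x y * (u x - u y) * (\<phi> x - \<phi> y)) summable_on UNIV"
proof -
  let ?N = "closed_nbhd S"
  have supp: "b x y * (u x - u y) * (\<phi> x - \<phi> y) \<noteq> 0 \<Longrightarrow> b x y \<noteq> 0 \<and> (x \<in> S \<or> y \<in> S)"
    for x y using S(2) by (cases "\<phi> x = 0"; cases "\<phi> y = 0") auto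
  show "(\<lambda>(x,y). b x y * (u x - u y) * (\<phi> x - \<phi> y)) summable_on UNIV"
    by (rule summable_on_edges[OF S(1) supp])
  have "energy_bil b u \<phi> = (\<Sum>x\<in>?N. \<Sum>y\<in>?N. b x y * (u x - u y) * (\<phi> x - \<phi> y))"
    unfolding energy_bil_def by (rule infsum_edges_eq_double_sum[OF S(1) supp])
  also have "\<dots> = 2 * (\<Sum>x\<in>?N. \<phi> x * (\<Sum>y\<in>?N. b x y * (u x - u y)))"
    by (rule double_sum_b_diff_mult_diff)
  also have "\<dots> = 2 * (\<Sum>x\<in>S. \<phi> x * (\<Sum>y\<in>?N. b x y * (u x - u y)))"
    by (intro arg_cong[where f = "(*) 2"] sum.mono_neutral_right finite_closed_nbhd S(1)
        subset_closed_nbhd) (use S(2) in force)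
  also have "\<dots> = 2 * (\<Sum>x\<in>S. \<phi> x * lapl u x)"
    using sum_b_diff_eq_lapl finite_closed_nbhd[OF S(1)] nbrs_subset_closed_nbhd by simp
  finally show "energy_bil b u \<phi> = 2 * (\<Sum>x\<in>S. \<phi> x * lapl u x)" .
qed

lemma energy_eq_energy_bil: "energy b f = energy_bil b f f"
  unfolding energy_def energy_bil_def by (simp add: power2_eq_square mult.assoc)

lemma energy_nonneg: "0 \<le> energy b f"
  unfolding energy_def by (intro infsum_nonneg) (auto simp: b_nonneg)

lemma fin_supp_imp_energy_summable: "fin_supp \<phi> \<Longrightarrow> energy_summable b \<phi>"
  using summable_on_energy_bil_finite_support[of "{x. \<phi> x \<noteq> 0}" \<phi> \<phi>]
  unfolding energy_summable_def fin_supp_def by (simp add: power2_eq_square mult.assoc)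

lemma fin_supp_imp_in_l2: "fin_supp \<phi> \<Longrightarrow> in_l2 \<phi>"
  unfolding in_l2_def fin_supp_def by (rule summable_on_finite_support) auto

lemma fin_supp_diff: "fin_supp \<phi> \<Longrightarrow> fin_supp \<psi> \<Longrightarrow> fin_supp (\<lambda>x. \<phi> x - \<psi> x)"
  unfolding fin_supp_def by (rule finite_subset[of _ "{x. \<phi> x \<noteq> 0} \<union> {x. \<psi> x \<noteq> 0}"]) auto

definition qform :: "real \<Rightarrow> ('a \<Rightarrow> real) \<Rightarrow> real" where
  "qform \<alpha> f = energy b f / 2 + \<alpha> * l2sq f"

definition qform_bil :: "real \<Rightarrow> ('a \<Rightarrow> real) \<Rightarrow> ('a \<Rightarrow> real) \<Rightarrow> real" where
  "qform_bil \<alpha> u v = energy_bil b u v / 2 + \<alpha> * (\<Sum>\<^sub>\<infinity>y. u y * v y)"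

lemma qform_eq_qform_bil: "qform \<alpha> f = qform_bil \<alpha> f f"
  unfolding qform_def qform_bil_def l2sq_def energy_eq_energy_bil by (simp add: power2_eq_square)

lemma qform_bil_finite_support:
  assumes "finite S" "\<And>x. v x \<noteq> 0 \<Longrightarrow> x \<in> S"
  shows "qform_bil \<alpha> u v = (\<Sum>x\<in>S. v x * (lapl u x + \<alpha> * u x))"
proof -
  have "(\<Sum>\<^sub>\<infinity>y. u y * v y) = (\<Sum>y\<in>S. u y * v y)"
    by (rule infsum_finite_support[OF assms(1)]) (use assms(2) in auto)
  moreover have "energy_bil b u v = 2 * (\<Sum>x\<in>S. v x * lapl u x)"
    by (rule energy_bil_finite_support) (use assms in auto)
  ultimately show ?thesis
    unfolding qform_bil_def by (simp add: sum_distrib_left algebra_simps sum.distrib)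
qed

lemma finite_sums_le_qform:
  assumes "0 \<le> \<alpha>" "energy_summable b u" "in_l2 u" "finite F" "finite H"
  shows "1/2 * (\<Sum>p\<in>F. b (fst p) (snd p) * (u (fst p) - u (snd p))^2) + \<alpha> * (\<Sum>x\<in>H. (u x)^2)
    \<le> qform \<alpha> u"
proof -
  have "(\<Sum>p\<in>F. b (fst p) (snd p) * (u (fst p) - u (snd p))^2) \<le> energy b u"
    unfolding energy_def case_prod_unfold using assms(2,4) b_nonneg
    by (intro finite_sum_le_infsum) (auto simp: energy_summable_def case_prod_unfold)
  moreover have "\<alpha> * (\<Sum>x\<in>H. (u x)^2) \<le> \<alpha> * l2sq u"
    unfolding l2sq_def using assms(1,3,5)
    by (intro mult_left_mono finite_sum_le_infsum) (auto simp: in_l2_def)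
  ultimately show ?thesis unfolding qform_def by linarith
qed

lemma l2sq_nonneg: "0 \<le> l2sq f"
  unfolding l2sq_def by (intro infsum_nonneg) simp

lemma qform_nonneg: "0 \<le> \<alpha> \<Longrightarrow> 0 \<le> qform \<alpha> f"
  unfolding qform_def using energy_nonneg[of f] l2sq_nonneg[of f] by simp

lemma qform_ge_min: "0 < \<alpha> \<Longrightarrow> min 1 \<alpha> * (energy b f / 2 + l2sq f) \<le> qform \<alpha> f"
  unfolding qform_def distrib_left using energy_nonneg[of f] l2sq_nonneg[of f]
  by (intro add_mono mult_left_le_one_le mult_right_mono) auto

lemma qform_le_max: "0 < \<alpha> \<Longrightarrow> qform \<alpha> f \<le> max 1 \<alpha> * (energy b f / 2 + l2sq f)"
  unfolding qform_def distrib_left using energy_nonneg[of f] l2sq_nonneg[of f]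
  by (intro add_mono mult_right_mono) (auto intro: order_trans[OF _ mult_right_mono[OF max.cobounded1]])

context
  fixes u v :: "'a \<Rightarrow> real"
  assumes u: "energy_summable b u" "in_l2 u" and v: "energy_summable b v" "in_l2 v"
begin

private lemma edge_summable:
  "(\<lambda>p. b (fst p) (snd p) * (u (fst p) - u (snd p))^2) summable_on UNIV"
  "(\<lambda>p. b (fst p) (snd p) * (v (fst p) - v (snd p))^2) summable_on UNIV"
  "(\<lambda>x. 1 * (u x)^2) summable_on UNIV" "(\<lambda>x. 1 * (v x)^2) summable_on UNIV"
  using u v by (simp_all add: energy_summable_def in_l2_def case_prod_unfold)

private lemma edge_diff:
  "(u (fst p) - u (snd p)) - (v (fst p) - v (snd p)) = (u (fst p) - v (fst p)) - (u (snd p) - v (snd p))"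
  by simp

lemma energy_summable_diff: "energy_summable b (\<lambda>x. u x - v x)"
  using weighted_sq_diff_summable_on[OF edge_summable(1,2) b_nonneg]
  by (simp add: energy_summable_def case_prod_unfold edge_diff)

lemma in_l2_diff: "in_l2 (\<lambda>x. u x - v x)"
  using weighted_sq_diff_summable_on[OF edge_summable(3,4)] by (simp add: in_l2_def)

lemma qform_diff: "qform \<alpha> (\<lambda>x. u x - v x) = qform \<alpha> u - 2 * qform_bil \<alpha> u v + qform \<alpha> v"
proof -
  have e: "energy b (\<lambda>x. u x - v x) = energy b u - 2 * energy_bil b u v + energy b v"
    using infsum_weighted_sq_diff[OF edge_summable(1,2) b_nonneg]
    by (simp add: energy_def energy_bil_def case_prod_unfold edge_diff mult.assoc)
  have l: "l2sq (\<lambda>x. u x - v x) = l2sq u - 2 * (\<Sum>\<^sub>\<infinity>y. u y * v y) + l2sq v"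
    using infsum_weighted_sq_diff[OF edge_summable(3,4)] by (simp add: l2sq_def)
  show ?thesis unfolding qform_def qform_bil_def e l by (simp add: field_simps)
qed

lemma qform_diff_le:
  assumes "0 \<le> \<alpha>"
  shows "qform \<alpha> (\<lambda>x. u x - v x) \<le> 2 * qform \<alpha> u + 2 * qform \<alpha> v"
proof -
  have "energy b (\<lambda>x. u x - v x) \<le> 2 * energy b u + 2 * energy b v"
    using infsum_weighted_sq_diff_le[OF edge_summable(1,2) b_nonneg]
    by (simp add: energy_def case_prod_unfold edge_diff)
  moreover have "\<alpha> * l2sq (\<lambda>x. u x - v x) \<le> \<alpha> * (2 * l2sq u + 2 * l2sq v)"
    using infsum_weighted_sq_diff_le[OF edge_summable(3,4)] assms
    by (intro mult_left_mono) (simp_all add: l2sq_def)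
  ultimately show ?thesis unfolding qform_def by (simp add: algebra_simps)
qed

end

text \<open>For \<open>\<alpha> > 0\<close> the norm of the form domain and \<open>qform \<alpha>\<close> are equivalent.\<close>

lemma qform_approx_if_form_approx:
  assumes "0 < \<alpha>" "0 < \<epsilon>"
    and approx: "\<forall>\<epsilon>>0. \<exists>\<phi>. fin_supp \<phi> \<and> energy_summable b (\<lambda>x. u x - \<phi> x) \<and>
      energy b (\<lambda>x. u x - \<phi> x) / 2 + l2sq (\<lambda>x. u x - \<phi> x) < \<epsilon>"
  shows "\<exists>\<phi>. fin_supp \<phi> \<and> qform \<alpha> (\<lambda>x. u x - \<phi> x) < \<epsilon>"
proof -
  have "0 < \<epsilon> / max 1 \<alpha>" using assms by simp
  then obtain \<phi> where \<phi>: "fin_supp \<phi>"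
    "energy b (\<lambda>x. u x - \<phi> x) / 2 + l2sq (\<lambda>x. u x - \<phi> x) < \<epsilon> / max 1 \<alpha>"
    using approx by blast
  then have "max 1 \<alpha> * (energy b (\<lambda>x. u x - \<phi> x) / 2 + l2sq (\<lambda>x. u x - \<phi> x)) < \<epsilon>"
    by (simp add: field_simps)
  then show ?thesis using \<phi>(1) qform_le_max[OF assms(1)] by (meson le_less_trans)
qed

lemma form_approx_if_qform_approx:
  assumes "0 < \<alpha>" "0 < \<epsilon>" and u: "energy_summable b u" "in_l2 u"
    and approx: "\<forall>\<epsilon>>0. \<exists>\<phi>. fin_supp \<phi> \<and> qform \<alpha> (\<lambda>x. u x - \<phi> x) < \<epsilon>"
  shows "\<exists>\<phi>. fin_supp \<phi> \<and> energy_summable b (\<lambda>x. u x - \<phi> x) \<and>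
    energy b (\<lambda>x. u x - \<phi> x) / 2 + l2sq (\<lambda>x. u x - \<phi> x) < \<epsilon>"
proof -
  have m: "0 < min 1 \<alpha>" using assms(1) by simp
  then obtain \<phi> where \<phi>: "fin_supp \<phi>" "qform \<alpha> (\<lambda>x. u x - \<phi> x) < \<epsilon> * min 1 \<alpha>"
    using approx assms(2) by (meson mult_pos_pos)
  then have "min 1 \<alpha> * (energy b (\<lambda>x. u x - \<phi> x) / 2 + l2sq (\<lambda>x. u x - \<phi> x)) < \<epsilon> * min 1 \<alpha>"
    using qform_ge_min[OF assms(1)] by (meson le_less_trans)
  then have "energy b (\<lambda>x. u x - \<phi> x) / 2 + l2sq (\<lambda>x. u x - \<phi> x) < \<epsilon>"
    using m by (simp add: mult.commute)
  moreover have "energy_summable b (\<lambda>x. u x - \<phi> x)"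
    using energy_summable_diff u fin_supp_imp_energy_summable fin_supp_imp_in_l2 \<phi>(1) by blast
  ultimately show ?thesis using \<phi>(1) by blast
qed

lemma mem_form_domain_iff:
  assumes "0 < \<alpha>"
  shows "u \<in> form_domain b \<longleftrightarrow> energy_summable b u \<and> in_l2 u \<and>
    (\<forall>\<epsilon>>0. \<exists>\<phi>. fin_supp \<phi> \<and> qform \<alpha> (\<lambda>x. u x - \<phi> x) < \<epsilon>)"
proof
  assume "u \<in> form_domain b"
  then show "energy_summable b u \<and> in_l2 u \<and>
      (\<forall>\<epsilon>>0. \<exists>\<phi>. fin_supp \<phi> \<and> qform \<alpha> (\<lambda>x. u x - \<phi> x) < \<epsilon>)"
    unfolding form_domain_def using qform_approx_if_form_approx[OF assms] by simp
next
  assume "energy_summable b u \<and> in_l2 u \<and>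
      (\<forall>\<epsilon>>0. \<exists>\<phi>. fin_supp \<phi> \<and> qform \<alpha> (\<lambda>x. u x - \<phi> x) < \<epsilon>)"
  then show "u \<in> form_domain b"
    unfolding form_domain_def using form_approx_if_qform_approx[OF assms] by simp
qed

lemma eq_0_if_orthogonal_and_approximable:
  assumes "0 < \<alpha>" and d: "energy_summable b d" "in_l2 d"
    and orth: "\<And>\<psi>. fin_supp \<psi> \<Longrightarrow> qform_bil \<alpha> d \<psi> = 0"
    and approx: "\<And>\<epsilon>. 0 < \<epsilon> \<Longrightarrow> \<exists>\<psi>. fin_supp \<psi> \<and> qform \<alpha> (\<lambda>x. d x - \<psi> x) < \<epsilon>"
  shows "d = (\<lambda>_. 0)"
proof -
  have "qform \<alpha> d < \<epsilon>" if eps: "0 < \<epsilon>" for \<epsilon>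
  proof -
    obtain \<psi> where \<psi>: "fin_supp \<psi>" "qform \<alpha> (\<lambda>x. d x - \<psi> x) < \<epsilon>" using approx[OF eps] by blast
    have "qform \<alpha> (\<lambda>x. d x - \<psi> x) = qform \<alpha> d + qform \<alpha> \<psi>"
      using qform_diff[OF d fin_supp_imp_energy_summable fin_supp_imp_in_l2] \<psi>(1) orth by simp
    then show ?thesis using \<psi>(2) qform_nonneg[of \<alpha> \<psi>] \<open>0 < \<alpha>\<close> by simp
  qed
  then have "qform \<alpha> d \<le> 0" by (metis not_le order_less_irrefl)
  then have "\<alpha> * l2sq d \<le> 0" unfolding qform_def using energy_nonneg[of d] by linarith
  then have "l2sq d \<le> 0" using \<open>0 < \<alpha>\<close> by (simp add: mult_le_0_iff)
  moreover have "(d x)^2 \<le> l2sq d" for x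
    using finite_sum_le_infsum[of "\<lambda>x. (d x)^2" UNIV "{x}"] d(2) by (simp add: in_l2_def l2sq_def)
  ultimately have "d x = 0" for x using order_trans power2_less_eq_zero_iff by metis
  then show ?thesis by blast
qed

end

section \<open>The resolvent\<close>

locale rooted_elliptic_graph = elliptic_graph +
  fixes x0 :: 'a
begin

definition delta :: "'a \<Rightarrow> real" where
  "delta x = (if x = x0 then 1 else 0)"

text \<open>\<open>res \<alpha>\<close> is the increasing limit of the Jacobi iteration for \<open>(L + \<alpha>) u = delta\<close>
  started at \<open>0\<close>; \<open>resolvent_eq_res\<close> identifies it with the resolvent.\<close>

definition jacobi_step :: "real \<Rightarrow> ('a \<Rightarrow> real) \<Rightarrow> 'a \<Rightarrow> real" where
  "jacobi_step \<alpha> u x = (delta x + (\<Sum>y\<in>nbrs x. b x y * u y)) / (deg x + \<alpha>)"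

definition jacobi_iter :: "real \<Rightarrow> nat \<Rightarrow> 'a \<Rightarrow> real" where
  "jacobi_iter \<alpha> k = (jacobi_step \<alpha> ^^ k) (\<lambda>_. 0)"

definition res :: "real \<Rightarrow> 'a \<Rightarrow> real" where
  "res \<alpha> x = (SUP k. jacobi_iter \<alpha> k x)"

lemma delta_nonneg: "0 \<le> delta x" and delta_le_1: "delta x \<le> 1"
  by (auto simp: delta_def)

lemma sum_mult_delta: "finite S \<Longrightarrow> x0 \<in> S \<Longrightarrow> (\<Sum>x\<in>S. v x * delta x) = v x0"
  unfolding delta_def by (simp add: if_distrib cong: if_cong)

lemma jacobi_iter_0 [simp]: "jacobi_iter \<alpha> 0 = (\<lambda>_. 0)"
  by (simp add: jacobi_iter_def)

lemma jacobi_iter_Suc: "jacobi_iter \<alpha> (Suc k) = jacobi_step \<alpha> (jacobi_iter \<alpha> k)"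
  by (simp add: jacobi_iter_def)

lemma jacobi_step_nonneg: "0 < \<alpha> \<Longrightarrow> (\<And>y. 0 \<le> u y) \<Longrightarrow> 0 \<le> jacobi_step \<alpha> u x"
  unfolding jacobi_step_def using deg_nonneg[of x] delta_nonneg[of x]
  by (intro divide_nonneg_pos add_nonneg_nonneg sum_nonneg mult_nonneg_nonneg b_nonneg) auto

lemma jacobi_step_mono:
  assumes "0 < \<alpha>" "\<alpha> \<le> \<beta>" "\<And>y. 0 \<le> u y" "\<And>y. u y \<le> v y"
  shows "jacobi_step \<beta> u x \<le> jacobi_step \<alpha> v x"
proof -
  have "0 \<le> delta x + (\<Sum>y\<in>nbrs x. b x y * u y)"
    using delta_nonneg[of x] assms by (intro add_nonneg_nonneg sum_nonneg mult_nonneg_nonneg b_nonneg) auto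
  moreover have "delta x + (\<Sum>y\<in>nbrs x. b x y * u y) \<le> delta x + (\<Sum>y\<in>nbrs x. b x y * v y)"
    using assms by (intro add_left_mono sum_mono mult_left_mono b_nonneg) auto
  ultimately show ?thesis
    unfolding jacobi_step_def using assms deg_nonneg[of x] by (intro frac_le) auto
qed

lemma jacobi_step_le:
  assumes "0 < \<alpha>" "\<And>y. 0 \<le> u y" "\<And>y. u y \<le> 1 / \<alpha>"
  shows "jacobi_step \<alpha> u x \<le> 1 / \<alpha>"
proof -
  have "(\<Sum>y\<in>nbrs x. b x y * u y) \<le> (\<Sum>y\<in>nbrs x. b x y * (1 / \<alpha>))"
    using assms by (intro sum_mono mult_left_mono b_nonneg) auto
  also have "\<dots> = deg x / \<alpha>" by (simp add: deg_def sum_divide_distrib)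
  finally have "delta x + (\<Sum>y\<in>nbrs x. b x y * u y) \<le> (deg x + \<alpha>) / \<alpha>"
    using delta_le_1[of x] assms(1) by (simp add: add_divide_distrib)
  then show ?thesis
    unfolding jacobi_step_def using deg_nonneg[of x] assms(1) by (simp add: divide_le_eq field_simps)
qed

lemma jacobi_iter_bounds:
  assumes "0 < \<alpha>"
  shows "0 \<le> jacobi_iter \<alpha> k x \<and> jacobi_iter \<alpha> k x \<le> jacobi_iter \<alpha> (Suc k) x
    \<and> jacobi_iter \<alpha> k x \<le> 1 / \<alpha>"
proof (induction k arbitrary: x)
  case 0
  show ?case using jacobi_step_nonneg[OF assms] assms by (simp add: jacobi_iter_Suc)
next
  case (Suc k)
  then show ?case
    unfolding jacobi_iter_Suc[of \<alpha> "Suc k"] jacobi_iter_Suc[of \<alpha> k]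
    using jacobi_step_nonneg[OF assms] jacobi_step_mono[OF assms order_refl] jacobi_step_le[OF assms]
    by (auto simp: jacobi_iter_Suc)
qed

lemma jacobi_iter_nonneg: "0 < \<alpha> \<Longrightarrow> 0 \<le> jacobi_iter \<alpha> k x"
  and jacobi_iter_le: "0 < \<alpha> \<Longrightarrow> jacobi_iter \<alpha> k x \<le> 1 / \<alpha>"
  and incseq_jacobi_iter: "0 < \<alpha> \<Longrightarrow> incseq (\<lambda>k. jacobi_iter \<alpha> k x)"
  using jacobi_iter_bounds by (auto intro: incseq_SucI)

lemma jacobi_iter_tendsto_res: "0 < \<alpha> \<Longrightarrow> (\<lambda>k. jacobi_iter \<alpha> k x) \<longlonglongrightarrow> res \<alpha> x"
  unfolding res_def using jacobi_iter_le
  by (intro LIMSEQ_incseq_SUP incseq_jacobi_iter) (auto intro!: bdd_aboveI)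

lemma jacobi_iter_le_res: "0 < \<alpha> \<Longrightarrow> jacobi_iter \<alpha> k x \<le> res \<alpha> x"
  using incseq_jacobi_iter jacobi_iter_tendsto_res by (metis incseq_le)

lemma res_nonneg: "0 < \<alpha> \<Longrightarrow> 0 \<le> res \<alpha> x"
  using jacobi_iter_le_res jacobi_iter_nonneg by (meson order_trans)

lemma res_eq:
  assumes "0 < \<alpha>"
  shows "(deg x + \<alpha>) * res \<alpha> x = delta x + (\<Sum>y\<in>nbrs x. b x y * res \<alpha> y)"
proof -
  have pos: "0 < deg x + \<alpha>" using deg_nonneg[of x] assms by simp
  have "(\<lambda>k. jacobi_step \<alpha> (jacobi_iter \<alpha> k) x)
      \<longlonglongrightarrow> (delta x + (\<Sum>y\<in>nbrs x. b x y * res \<alpha> y)) / (deg x + \<alpha>)"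
    unfolding jacobi_step_def using pos by (intro tendsto_intros jacobi_iter_tendsto_res assms) auto
  moreover have "(\<lambda>k. jacobi_step \<alpha> (jacobi_iter \<alpha> k) x) \<longlonglongrightarrow> res \<alpha> x"
    using LIMSEQ_Suc[OF jacobi_iter_tendsto_res[OF assms, of x]] by (simp add: jacobi_iter_Suc)
  ultimately show ?thesis using pos LIMSEQ_unique by (fastforce simp: field_simps)
qed

lemma lapl_res: "0 < \<alpha> \<Longrightarrow> lapl (res \<alpha>) x + \<alpha> * res \<alpha> x = delta x"
  using res_eq[of \<alpha> x] unfolding lapl_eq_deg by (simp add: algebra_simps)

lemma lapl_jacobi_iter_le: "0 < \<alpha> \<Longrightarrow> lapl (jacobi_iter \<alpha> k) x + \<alpha> * jacobi_iter \<alpha> k x \<le> delta x"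
proof (cases k)
  case 0
  then show ?thesis by (simp add: lapl_def delta_def)
next
  case (Suc j)
  assume "0 < \<alpha>"
  then have "(deg x + \<alpha>) * jacobi_iter \<alpha> k x = delta x + (\<Sum>y\<in>nbrs x. b x y * jacobi_iter \<alpha> j y)"
    using deg_nonneg[of x] by (simp add: Suc jacobi_iter_Suc jacobi_step_def)
  moreover have "(\<Sum>y\<in>nbrs x. b x y * jacobi_iter \<alpha> j y) \<le> (\<Sum>y\<in>nbrs x. b x y * jacobi_iter \<alpha> k y)"
    using jacobi_iter_bounds[OF \<open>0 < \<alpha>\<close>] by (intro sum_mono mult_left_mono b_nonneg) (simp add: Suc)
  ultimately show ?thesis unfolding lapl_eq_deg by (simp add: algebra_simps)
qed

lemma jacobi_iter_antimono: "0 < \<alpha> \<Longrightarrow> \<alpha> \<le> \<beta> \<Longrightarrow> jacobi_iter \<beta> k x \<le> jacobi_iter \<alpha> k x"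
proof (induction k arbitrary: x)
  case (Suc k)
  then show ?case
    unfolding jacobi_iter_Suc using jacobi_iter_nonneg[of \<beta>]
    by (intro jacobi_step_mono) auto
qed simp

lemma res_antimono: "0 < \<alpha> \<Longrightarrow> \<alpha> \<le> \<beta> \<Longrightarrow> res \<beta> x \<le> res \<alpha> x"
  using jacobi_iter_antimono
  by (intro LIMSEQ_le[OF jacobi_iter_tendsto_res jacobi_iter_tendsto_res]) auto

lemma res_pos:
  assumes "0 < \<alpha>"
  shows "0 < res \<alpha> x0"
proof -
  have "0 < jacobi_iter \<alpha> 1 x0"
    using assms deg_nonneg[of x0] by (simp add: jacobi_iter_def jacobi_step_def delta_def)
  then show ?thesis using jacobi_iter_le_res[OF assms] by (rule less_le_trans)
qed

lemma finite_support_jacobi_iter: "finite {x. jacobi_iter \<alpha> k x \<noteq> 0}"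
proof (induction k)
  case (Suc k)
  have "{x. jacobi_iter \<alpha> (Suc k) x \<noteq> 0} \<subseteq> insert x0 (closed_nbhd {x. jacobi_iter \<alpha> k x \<noteq> 0})"
  proof
    fix x assume x: "x \<in> {x. jacobi_iter \<alpha> (Suc k) x \<noteq> 0}"
    show "x \<in> insert x0 (closed_nbhd {x. jacobi_iter \<alpha> k x \<noteq> 0})"
    proof (cases "x = x0")
      case False
      have "\<exists>y\<in>nbrs x. jacobi_iter \<alpha> k y \<noteq> 0"
      proof (rule ccontr)
        assume "\<not> (\<exists>y\<in>nbrs x. jacobi_iter \<alpha> k y \<noteq> 0)"
        then have "jacobi_iter \<alpha> (Suc k) x = 0"
          using False by (simp add: jacobi_iter_Suc jacobi_step_def delta_def)
        with x show False by simp
      qed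
      then obtain y where "x \<in> nbrs y" "jacobi_iter \<alpha> k y \<noteq> 0"
        using mem_nbrs_sym by auto
      then show ?thesis using nbrs_subset_closed_nbhd[of y "{x. jacobi_iter \<alpha> k x \<noteq> 0}"] by auto
    qed simp
  qed
  then show ?case using finite_closed_nbhd[OF Suc] finite_subset by auto
qed simp

lemma fin_supp_jacobi_iter: "fin_supp (jacobi_iter \<alpha> k)"
  unfolding fin_supp_def by (rule finite_support_jacobi_iter)

lemma qform_bil_delta:
  assumes "fin_supp v" "\<And>x. lapl u x + \<alpha> * u x = delta x"
  shows "qform_bil \<alpha> u v = v x0"
proof -
  have "qform_bil \<alpha> u v = (\<Sum>x\<in>insert x0 {x. v x \<noteq> 0}. v x * (lapl u x + \<alpha> * u x))"
    using assms(1) by (intro qform_bil_finite_support) (auto simp: fin_supp_def)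
  also have "\<dots> = v x0" using assms by (simp add: sum_mult_delta fin_supp_def)
  finally show ?thesis .
qed

lemma qform_jacobi_iter_le: "0 < \<alpha> \<Longrightarrow> qform \<alpha> (jacobi_iter \<alpha> k) \<le> jacobi_iter \<alpha> k x0"
proof -
  assume "0 < \<alpha>"
  let ?S = "insert x0 {x. jacobi_iter \<alpha> k x \<noteq> 0}"
  have fin: "finite ?S" using finite_support_jacobi_iter by simp
  have "qform \<alpha> (jacobi_iter \<alpha> k)
      = (\<Sum>x\<in>?S. jacobi_iter \<alpha> k x * (lapl (jacobi_iter \<alpha> k) x + \<alpha> * jacobi_iter \<alpha> k x))"
    unfolding qform_eq_qform_bil by (rule qform_bil_finite_support[OF fin]) auto
  also have "\<dots> \<le> (\<Sum>x\<in>?S. jacobi_iter \<alpha> k x * delta x)"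
    using jacobi_iter_nonneg lapl_jacobi_iter_le \<open>0 < \<alpha>\<close> by (intro sum_mono mult_left_mono) auto
  also have "\<dots> = jacobi_iter \<alpha> k x0" using fin by (simp add: sum_mult_delta)
  finally show ?thesis .
qed

text \<open>The bound \<open>qform \<alpha> (jacobi_iter \<alpha> k) \<le> res \<alpha> x0\<close> passes to the limit on finite partial sums.\<close>

lemma
  assumes "0 < \<alpha>"
  shows energy_summable_res: "energy_summable b (res \<alpha>)"
    and in_l2_res: "in_l2 (res \<alpha>)"
    and qform_res_le: "qform \<alpha> (res \<alpha>) \<le> res \<alpha> x0"
proof -
  let ?e = "\<lambda>u p. b (fst p) (snd p) * (u (fst p) - u (snd p))^2"
  have bound: "1/2 * sum (?e (res \<alpha>)) F + \<alpha> * sum (\<lambda>x. (res \<alpha> x)^2) H \<le> res \<alpha> x0"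
    if "finite F" "finite H" for F H
  proof -
    have "(\<lambda>k. 1/2 * sum (?e (jacobi_iter \<alpha> k)) F + \<alpha> * sum (\<lambda>x. (jacobi_iter \<alpha> k x)^2) H)
        \<longlonglongrightarrow> 1/2 * sum (?e (res \<alpha>)) F + \<alpha> * sum (\<lambda>x. (res \<alpha> x)^2) H"
      by (intro tendsto_intros jacobi_iter_tendsto_res assms)
    moreover have "1/2 * sum (?e (jacobi_iter \<alpha> k)) F + \<alpha> * sum (\<lambda>x. (jacobi_iter \<alpha> k x)^2) H
        \<le> res \<alpha> x0" for k
      using finite_sums_le_qform[OF less_imp_le[OF assms] fin_supp_imp_energy_summable
          fin_supp_imp_in_l2 that, OF fin_supp_jacobi_iter fin_supp_jacobi_iter]
        qform_jacobi_iter_le[OF assms] jacobi_iter_le_res[OF assms]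
      by (meson order_trans)
    ultimately show ?thesis by (intro LIMSEQ_le_const2) auto
  qed
  have "0 \<le> ?e (res \<alpha>) p" for p by (simp add: b_nonneg)
  note sums = infsum_pair_le_of_finite_sums_le[OF this zero_le_power2 _ assms bound, simplified]
  show "energy_summable b (res \<alpha>)"
    using sums(1) b_nonneg by (simp add: energy_summable_def case_prod_unfold)
  show "in_l2 (res \<alpha>)" using sums(2) by (simp add: in_l2_def)
  show "qform \<alpha> (res \<alpha>) \<le> res \<alpha> x0"
    using sums(3) b_nonneg by (simp add: qform_def energy_def l2sq_def case_prod_unfold)
qed

lemma qform_res_minus_jacobi_iter_le:
  assumes "0 < \<alpha>"
  shows "qform \<alpha> (\<lambda>x. res \<alpha> x - jacobi_iter \<alpha> k x) \<le> res \<alpha> x0 - jacobi_iter \<alpha> k x0"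
proof -
  have "qform_bil \<alpha> (res \<alpha>) (jacobi_iter \<alpha> k) = jacobi_iter \<alpha> k x0"
    using lapl_res[OF assms] fin_supp_jacobi_iter by (intro qform_bil_delta) auto
  then show ?thesis
    using qform_diff[OF energy_summable_res[OF assms] in_l2_res[OF assms]
        fin_supp_imp_energy_summable fin_supp_imp_in_l2, OF fin_supp_jacobi_iter fin_supp_jacobi_iter]
      qform_jacobi_iter_le[OF assms, of k] qform_res_le[OF assms]
    by simp
qed

lemma res_approx:
  assumes "0 < \<alpha>" "0 < \<epsilon>"
  shows "\<exists>k. qform \<alpha> (\<lambda>x. res \<alpha> x - jacobi_iter \<alpha> k x) < \<epsilon>"
proof -
  obtain k where "\<bar>jacobi_iter \<alpha> k x0 - res \<alpha> x0\<bar> < \<epsilon>"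
    using LIMSEQ_D[OF jacobi_iter_tendsto_res[OF assms(1)] assms(2)] by auto
  then have "qform \<alpha> (\<lambda>x. res \<alpha> x - jacobi_iter \<alpha> k x) < \<epsilon>"
    using qform_res_minus_jacobi_iter_le[OF assms(1), of k] by (simp add: abs_less_iff)
  then show ?thesis ..
qed

lemma res_in_form_domain:
  assumes "0 < \<alpha>"
  shows "res \<alpha> \<in> form_domain b"
  unfolding mem_form_domain_iff[OF assms]
proof (intro conjI allI impI)
  show "energy_summable b (res \<alpha>)" by (rule energy_summable_res[OF assms])
  show "in_l2 (res \<alpha>)" by (rule in_l2_res[OF assms])
  fix \<epsilon> :: real
  assume "0 < \<epsilon>"
  then obtain k where "qform \<alpha> (\<lambda>x. res \<alpha> x - jacobi_iter \<alpha> k x) < \<epsilon>"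
    using res_approx[OF assms] by blast
  then show "\<exists>\<phi>. fin_supp \<phi> \<and> qform \<alpha> (\<lambda>x. res \<alpha> x - \<phi> x) < \<epsilon>"
    using fin_supp_jacobi_iter by blast
qed

lemma res_weak_eq:
  assumes "0 < \<alpha>" "fin_supp \<phi>"
  shows "energy_bil b (res \<alpha>) \<phi> / 2 + \<alpha> * (\<Sum>\<^sub>\<infinity>y. res \<alpha> y * \<phi> y) = \<phi> x0"
  using qform_bil_delta[OF assms(2) lapl_res[OF assms(1)]] unfolding qform_bil_def .

lemma weak_solution_unique:
  assumes "0 < \<alpha>" and u: "u \<in> form_domain b"
    and weak: "\<forall>\<phi>. fin_supp \<phi> \<longrightarrow> energy_bil b u \<phi> / 2 + \<alpha> * (\<Sum>\<^sub>\<infinity>y. u y * \<phi> y) = \<phi> x0"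
  shows "u = res \<alpha>"
proof -
  define d where "d x = u x - res \<alpha> x" for x
  have u_space: "energy_summable b u" "in_l2 u"
    and u_approx: "\<And>\<epsilon>. 0 < \<epsilon> \<Longrightarrow> \<exists>\<phi>. fin_supp \<phi> \<and> qform \<alpha> (\<lambda>x. u x - \<phi> x) < \<epsilon>"
    using u unfolding mem_form_domain_iff[OF assms(1)] by auto
  note res_space = energy_summable_res[OF assms(1)] in_l2_res[OF assms(1)]
  have "d = (\<lambda>_. 0)"
  proof (rule eq_0_if_orthogonal_and_approximable[OF assms(1)])
    show "energy_summable b d" "in_l2 d"
      unfolding d_def using u_space res_space by (auto intro: energy_summable_diff in_l2_diff)
  next
    fix \<psi> :: "'a \<Rightarrow> real"
    assume "fin_supp \<psi>"
    then have "qform_bil \<alpha> d \<psi> = qform_bil \<alpha> u \<psi> - qform_bil \<alpha> (res \<alpha>) \<psi>"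
      unfolding d_def
      by (simp add: qform_bil_finite_support[of "{x. \<psi> x \<noteq> 0}"] fin_supp_def lapl_diff
          algebra_simps sum_subtractf)
    then show "qform_bil \<alpha> d \<psi> = 0"
      using weak res_weak_eq[OF assms(1)] \<open>fin_supp \<psi>\<close> by (simp add: qform_bil_def)
  next
    fix \<epsilon> :: real assume "0 < \<epsilon>"
    then obtain \<phi> k where \<phi>: "fin_supp \<phi>" "qform \<alpha> (\<lambda>x. u x - \<phi> x) < \<epsilon> / 4"
      and k: "qform \<alpha> (\<lambda>x. res \<alpha> x - jacobi_iter \<alpha> k x) < \<epsilon> / 4"
      using u_approx res_approx[OF assms(1)] by (meson zero_less_divide_iff zero_less_numeral)
    have "qform \<alpha> (\<lambda>x. d x - (\<phi> x - jacobi_iter \<alpha> k x))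
        = qform \<alpha> (\<lambda>x. (u x - \<phi> x) - (res \<alpha> x - jacobi_iter \<alpha> k x))"
      unfolding d_def by (simp add: algebra_simps)
    also have "\<dots> \<le> 2 * qform \<alpha> (\<lambda>x. u x - \<phi> x) + 2 * qform \<alpha> (\<lambda>x. res \<alpha> x - jacobi_iter \<alpha> k x)"
      using assms(1) u_space res_space fin_supp_imp_energy_summable[OF \<phi>(1)] fin_supp_imp_in_l2[OF \<phi>(1)]
        fin_supp_imp_energy_summable[OF fin_supp_jacobi_iter] fin_supp_imp_in_l2[OF fin_supp_jacobi_iter]
      by (intro qform_diff_le energy_summable_diff in_l2_diff) auto
    finally show "\<exists>\<psi>. fin_supp \<psi> \<and> qform \<alpha> (\<lambda>x. d x - \<psi> x) < \<epsilon>"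
      using \<phi> k fin_supp_diff[OF \<phi>(1) fin_supp_jacobi_iter]
      by (intro exI[of _ "\<lambda>x. \<phi> x - jacobi_iter \<alpha> k x"] conjI) auto
  qed
  then show ?thesis unfolding d_def by (auto simp: fun_eq_iff)
qed

lemma resolvent_eq_res: "0 < \<alpha> \<Longrightarrow> resolvent b \<alpha> x0 = res \<alpha>"
  unfolding resolvent_def
  using res_in_form_domain res_weak_eq weak_solution_unique by (intro the_equality) auto

section \<open>The Green function\<close>

lemma tendsto_res_SUP:
  "((\<lambda>\<alpha>. ereal (res \<alpha> x)) \<longlongrightarrow> (SUP \<alpha>\<in>{0<..}. ereal (res \<alpha> x))) (at_right 0)"
proof (rule order_tendstoI)
  fix a
  assume "a < (SUP \<alpha>\<in>{0<..}. ereal (res \<alpha> x))"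
  then obtain \<alpha>0 where \<alpha>0: "0 < \<alpha>0" "a < ereal (res \<alpha>0 x)" by (auto simp: less_SUP_iff)
  have "a < ereal (res \<alpha> x)" if "0 < \<alpha>" "\<alpha> < \<alpha>0" for \<alpha>
    using \<alpha>0 res_antimono[of \<alpha> \<alpha>0 x] that by (auto intro: order_less_le_trans)
  then show "\<forall>\<^sub>F \<alpha> in at_right 0. a < ereal (res \<alpha> x)"
    unfolding eventually_at_right[OF \<alpha>0(1)] using \<alpha>0(1) by blast
next
  fix a
  assume "(SUP \<alpha>\<in>{0<..}. ereal (res \<alpha> x)) < a"
  moreover have "ereal (res \<alpha> x) \<le> (SUP \<alpha>\<in>{0<..}. ereal (res \<alpha> x))" if "0 < \<alpha>" for \<alpha>
    by (rule SUP_upper) (use that in simp)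
  ultimately have "ereal (res \<alpha> x) < a" if "0 < \<alpha>" for \<alpha>
    using that by (meson order_le_less_trans)
  then show "\<forall>\<^sub>F \<alpha> in at_right 0. ereal (res \<alpha> x) < a"
    using eventually_at_right_less[of 0] by (auto elim: eventually_mono)
qed

lemma green_eq_SUP: "green b x0 x = (SUP \<alpha>\<in>{0<..}. ereal (res \<alpha> x))"
proof -
  have "\<forall>\<^sub>F \<alpha> in at_right 0. ereal (res \<alpha> x) = ereal (resolvent b \<alpha> x0 x)"
    using eventually_at_right_less[of 0] by (rule eventually_mono) (simp add: resolvent_eq_res)
  then have "((\<lambda>\<alpha>. ereal (resolvent b \<alpha> x0 x)) \<longlongrightarrow> (SUP \<alpha>\<in>{0<..}. ereal (res \<alpha> x))) (at_right 0)"
    using tendsto_res_SUP by (rule tendsto_cong[THEN iffD1])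
  then show ?thesis unfolding green_def by (rule tendsto_Lim[OF trivial_limit_at_right_real])
qed

end

locale transient_graph = rooted_elliptic_graph +
  assumes transient: "transient b" and connected: "connected_graph b"
begin

definition G :: "'a \<Rightarrow> real" where
  "G x = real_of_ereal (green b x0 x)"

lemma green_eq_G: "green b x0 x = ereal (G x)"
proof -
  have "ereal (res 1 x) \<le> green b x0 x" unfolding green_eq_SUP by (intro SUP_upper) auto
  then have "green b x0 x \<noteq> - \<infinity>" using res_nonneg[of 1 x] by auto
  moreover have "green b x0 x \<noteq> \<infinity>" using transient by (auto simp: transient_def)
  ultimately show ?thesis unfolding G_def by (cases "green b x0 x") auto
qed

lemma res_le_G: "0 < \<alpha> \<Longrightarrow> res \<alpha> x \<le> G x"
  using SUP_upper[of \<alpha> "{0<..}" "\<lambda>\<alpha>. ereal (res \<alpha> x)"]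
  unfolding green_eq_SUP[symmetric] green_eq_G by simp

lemma G_nonneg: "0 \<le> G x"
  using res_le_G[of 1 x] res_nonneg[of 1 x] by simp

lemma tendsto_res_G: "((\<lambda>\<alpha>. res \<alpha> x) \<longlongrightarrow> G x) (at_right 0)"
  using tendsto_res_SUP[of x] unfolding green_eq_SUP[symmetric] green_eq_G lim_ereal .

lemma G_eq: "deg x * G x = delta x + (\<Sum>y\<in>nbrs x. b x y * G y)"
proof -
  have "((\<lambda>\<alpha>. (deg x + \<alpha>) * res \<alpha> x) \<longlongrightarrow> (deg x + 0) * G x) (at_right 0)"
    by (intro tendsto_intros tendsto_res_G)
  moreover have "((\<lambda>\<alpha>. delta x + (\<Sum>y\<in>nbrs x. b x y * res \<alpha> y))
      \<longlongrightarrow> delta x + (\<Sum>y\<in>nbrs x. b x y * G y)) (at_right 0)"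
    by (intro tendsto_intros tendsto_res_G)
  moreover have "\<forall>\<^sub>F \<alpha> in at_right 0. (deg x + \<alpha>) * res \<alpha> x = delta x + (\<Sum>y\<in>nbrs x. b x y * res \<alpha> y)"
    using eventually_at_right_less[of 0] by (rule eventually_mono) (rule res_eq)
  ultimately show ?thesis
    using tendsto_cong tendsto_unique[OF trivial_limit_at_right_real] by fastforce
qed

lemma lapl_G: "lapl G x = delta x"
  using G_eq[of x] unfolding lapl_eq_deg by simp

lemma b_mult_G_le: "b x y * G y \<le> deg x * G x"
proof -
  have "b x y * G y \<le> (\<Sum>z\<in>nbrs x. b x z * G z)"
  proof (cases "0 < b x y")
    case True
    then show ?thesis
      using G_nonneg b_nonneg finite_nbrs by (intro member_le_sum) (auto simp: nbrs_def)
  next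
    case False
    then show ?thesis
      using G_nonneg b_nonneg[of x y] by (auto intro!: sum_nonneg mult_nonneg_nonneg b_nonneg)
  qed
  then show ?thesis using G_eq[of x] delta_nonneg[of x] by linarith
qed

lemma G_pos: "0 < G x"
proof -
  have "(\<lambda>u v. 0 < b u v)\<^sup>*\<^sup>* x0 x" using connected by (simp add: connected_graph_def)
  then show ?thesis
  proof (induction rule: rtranclp_induct)
    case base
    show ?case using res_le_G[of 1 x0] res_pos[of 1] by simp
  next
    case (step y z)
    then have "0 < b z y * G y" using b_sym[of y z] by simp
    then have "0 < deg z * G z" using b_mult_G_le[of z y] by linarith
    then show ?case using deg_nonneg[of z] G_nonneg[of z] by (simp add: zero_less_mult_iff)
  qed
qed

lemma harnack:
  assumes "0 < b x y"
  shows "E * G y \<le> G x"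
proof -
  have "E * deg x * G y \<le> b x y * G y"
    using E_deg_le_b[OF assms] G_nonneg by (rule mult_right_mono)
  also have "\<dots> \<le> deg x * G x" by (rule b_mult_G_le)
  finally have "deg x * (E * G y) \<le> deg x * G x" by (simp only: ac_simps)
  moreover have "0 < deg x" using b_le_deg[of x y] assms by linarith
  ultimately show ?thesis by simp
qed

definition level :: "real \<Rightarrow> 'a set" where
  "level t = {x. t \<le> G x}"

definition log_energy :: "'a set \<Rightarrow> real" where
  "log_energy A = (\<Sum>x\<in>A. \<Sum>y\<in>A. b x y * (G x - G y) * (ln (G x) - ln (G y)))"

definition outflow :: "'a set \<Rightarrow> 'a \<Rightarrow> real" where
  "outflow A x = (\<Sum>y\<in>nbrs x - A. b x y * (G x - G y))"

lemma
  assumes "finite A" "x0 \<in> A"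
  shows sum_outflow: "(\<Sum>x\<in>A. outflow A x) = 1"
    and log_energy_eq_outflow: "log_energy A = 2 * (ln (G x0) - (\<Sum>x\<in>A. ln (G x) * outflow A x))"
proof -
  have inner: "(\<Sum>y\<in>A. b x y * (G x - G y)) = delta x - outflow A x" for x
    unfolding outflow_def sum_b_diff_eq_lapl_minus_outflow[OF assms(1)] lapl_G ..
  have "0 = (\<Sum>x\<in>A. \<Sum>y\<in>A. b x y * (G x - G y))" by (simp add: double_sum_b_diff_eq_0)
  also have "\<dots> = 1 - (\<Sum>x\<in>A. outflow A x)"
    unfolding inner sum_subtractf using sum_mult_delta[OF assms, of "\<lambda>_. 1"] by simp
  finally show "(\<Sum>x\<in>A. outflow A x) = 1" by simp
  have "log_energy A = 2 * (\<Sum>x\<in>A. ln (G x) * (delta x - outflow A x))"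
    unfolding log_energy_def double_sum_b_diff_mult_diff inner ..
  also have "\<dots> = 2 * (ln (G x0) - (\<Sum>x\<in>A. ln (G x) * outflow A x))"
    using sum_mult_delta[OF assms, of "\<lambda>x. ln (G x)"] by (simp add: algebra_simps sum_subtractf)
  finally show "log_energy A = 2 * (ln (G x0) - (\<Sum>x\<in>A. ln (G x) * outflow A x))" .
qed

lemma outflow_level_nonneg: "x \<in> level t \<Longrightarrow> 0 \<le> outflow (level t) x"
  unfolding outflow_def by (intro sum_nonneg mult_nonneg_nonneg b_nonneg) (auto simp: level_def)

lemma G_lt_if_outflow_level:
  assumes "outflow (level t) x \<noteq> 0"
  shows "G x < t / E"
proof -
  obtain y where y: "y \<in> nbrs x" "y \<notin> level t"
    using assms unfolding outflow_def by (rule sum.not_neutral_contains_not_neutral) blast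
  then have "0 < b y x" using b_sym[of x y] by (simp add: nbrs_def)
  then have "E * G x \<le> G y" by (rule harnack)
  then have "E * G x < t" using y by (simp add: level_def)
  then show ?thesis using E_pos by (simp add: field_simps)
qed

lemma log_energy_level_bounds:
  assumes t: "0 < t" "t \<le> G x0" and fin: "finite (level t)"
  shows "2 * (ln (G x0) - ln (t / E)) \<le> log_energy (level t)"
    and "log_energy (level t) \<le> 2 * (ln (G x0) - ln t)"
proof -
  let ?A = "level t"
  have x0: "x0 \<in> ?A" using t by (simp add: level_def)
  have "ln t * outflow ?A x \<le> ln (G x) * outflow ?A x" if "x \<in> ?A" for x
    using that t outflow_level_nonneg[OF that] by (intro mult_right_mono) (auto simp: level_def)
  then have "(\<Sum>x\<in>?A. ln t * outflow ?A x) \<le> (\<Sum>x\<in>?A. ln (G x) * outflow ?A x)"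
    by (rule sum_mono)
  then have "ln t \<le> (\<Sum>x\<in>?A. ln (G x) * outflow ?A x)"
    using sum_outflow[OF fin x0] by (simp add: sum_distrib_left[symmetric])
  then show "log_energy ?A \<le> 2 * (ln (G x0) - ln t)"
    unfolding log_energy_eq_outflow[OF fin x0] by simp
  have "ln (G x) * outflow ?A x \<le> ln (t / E) * outflow ?A x" if "x \<in> ?A" for x
  proof (cases "outflow ?A x = 0")
    case False
    then have "G x < t / E" by (rule G_lt_if_outflow_level)
    then have "ln (G x) \<le> ln (t / E)" using G_pos[of x] by simp
    then show ?thesis using outflow_level_nonneg[OF that] by (rule mult_right_mono)
  qed simp
  then have "(\<Sum>x\<in>?A. ln (G x) * outflow ?A x) \<le> (\<Sum>x\<in>?A. ln (t / E) * outflow ?A x)"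
    by (rule sum_mono)
  then have "(\<Sum>x\<in>?A. ln (G x) * outflow ?A x) \<le> ln (t / E)"
    using sum_outflow[OF fin x0] by (simp add: sum_distrib_left[symmetric])
  then show "2 * (ln (G x0) - ln (t / E)) \<le> log_energy ?A"
    unfolding log_energy_eq_outflow[OF fin x0] by simp
qed

section \<open>The ground state transform and optimality of \<open>w\<^sub>G\<close>\<close>

lemma finite_level: "green_proper b x0 \<Longrightarrow> 0 < t \<Longrightarrow> finite (level t)"
  unfolding green_proper_def level_def green_eq_G by simp

definition sqrtG :: "'a \<Rightarrow> real" where
  "sqrtG x = sqrt (G x)"

text \<open>\<open>W = w\<^sub>G G\<close> by \<open>wG_mult_G\<close>.\<close>

definition W :: "'a \<Rightarrow> real" where
  "W x = 2 * sqrtG x * lapl sqrtG x"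

lemma sqrtG_mult_self: "sqrtG x * sqrtG x = G x"
  using G_nonneg[of x] by (simp add: sqrtG_def)

lemma sqrtG_pos: "0 < sqrtG x"
  using G_pos[of x] by (simp add: sqrtG_def)

lemma W_eq: "W x = delta x + (\<Sum>y\<in>nbrs x. b x y * (sqrtG x - sqrtG y)^2)"
proof -
  have "W x = (\<Sum>y\<in>nbrs x. b x y * (G x - G y) + b x y * (sqrtG x - sqrtG y)^2)"
    unfolding W_def lapl_def sum_distrib_left
    by (rule sum.cong) (auto simp: power2_eq_square algebra_simps sqrtG_mult_self[symmetric])
  also have "\<dots> = lapl G x + (\<Sum>y\<in>nbrs x. b x y * (sqrtG x - sqrtG y)^2)"
    by (simp add: sum.distrib lapl_def)
  finally show ?thesis by (simp add: lapl_G)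
qed

lemma W_nonneg: "0 \<le> W x"
  unfolding W_eq using delta_nonneg[of x]
  by (intro add_nonneg_nonneg sum_nonneg mult_nonneg_nonneg b_nonneg) auto

lemma wG_mult_G: "wG b x0 x * G x = W x"
proof -
  have "wG b x0 x = 2 * lapl sqrtG x / sqrtG x"
    unfolding wG_def lap_eq_lapl by (simp add: sqrtG_def[abs_def] G_def)
  then show ?thesis
    using sqrtG_pos[of x] unfolding W_def sqrtG_mult_self[symmetric] by (simp add: field_simps)
qed

lemma ground_state_representation:
  assumes S: "finite S" "\<And>x. \<psi> x \<noteq> 0 \<Longrightarrow> x \<in> S"
  shows "energy b (\<lambda>x. sqrtG x * \<psi> x) = (\<Sum>x\<in>S. W x * (\<psi> x)^2)
     + (\<Sum>x\<in>closed_nbhd S. \<Sum>y\<in>closed_nbhd S. b x y * (sqrtG x * sqrtG y) * (\<psi> x - \<psi> y)^2)"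
proof -
  let ?N = "closed_nbhd S"
  let ?g = "\<lambda>x y. b x y * ((\<psi> x)^2 * (G x - sqrtG x * sqrtG y))"
  have supp: "b x y * (sqrtG x * \<psi> x - sqrtG y * \<psi> y)^2 \<noteq> 0 \<Longrightarrow> b x y \<noteq> 0 \<and> (x \<in> S \<or> y \<in> S)"
    for x y using S(2) by (cases "\<psi> x = 0"; cases "\<psi> y = 0") auto
  have "energy b (\<lambda>x. sqrtG x * \<psi> x) = (\<Sum>x\<in>?N. \<Sum>y\<in>?N. b x y * (sqrtG x * \<psi> x - sqrtG y * \<psi> y)^2)"
    unfolding energy_def by (rule infsum_edges_eq_double_sum[OF S(1) supp])
  also have "\<dots> = (\<Sum>x\<in>?N. \<Sum>y\<in>?N. b x y * (sqrtG x * sqrtG y) * (\<psi> x - \<psi> y)^2)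
      + ((\<Sum>x\<in>?N. \<Sum>y\<in>?N. ?g x y) + (\<Sum>x\<in>?N. \<Sum>y\<in>?N. ?g y x))"
    unfolding sum.distrib[symmetric]
    by (intro sum.cong refl) (simp add: power2_eq_square algebra_simps sqrtG_mult_self[symmetric] b_sym)
  also have "(\<Sum>x\<in>?N. \<Sum>y\<in>?N. ?g y x) = (\<Sum>x\<in>?N. \<Sum>y\<in>?N. ?g x y)"
    by (subst sum.swap) simp
  also have "(\<Sum>x\<in>?N. \<Sum>y\<in>?N. ?g x y) = (\<Sum>x\<in>?N. (\<psi> x)^2 * (sqrtG x * (\<Sum>y\<in>?N. b x y * (sqrtG x - sqrtG y))))"
    by (rule sum.cong) (auto simp: sum_distrib_left algebra_simps sqrtG_mult_self[symmetric])
  also have "\<dots> = (\<Sum>x\<in>S. (\<psi> x)^2 * (sqrtG x * (\<Sum>y\<in>?N. b x y * (sqrtG x - sqrtG y))))"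
    by (intro sum.mono_neutral_right finite_closed_nbhd S(1) subset_closed_nbhd) (use S(2) in force)
  also have "\<dots> = (\<Sum>x\<in>S. (\<psi> x)^2 * (sqrtG x * lapl sqrtG x))"
    using sum_b_diff_eq_lapl finite_closed_nbhd[OF S(1)] nbrs_subset_closed_nbhd by simp
  finally show ?thesis unfolding W_def by (simp add: sum_distrib_left algebra_simps)
qed

lemma log_edge_nonneg: "0 \<le> b x y * (G x - G y) * (ln (G x) - ln (G y))"
  using diff_mult_ln_diff_nonneg[OF G_pos G_pos, of x y] b_nonneg[of x y] by (simp add: mult.assoc)

lemma log_edge_le_sqrt_edge:
  "E / 4 * (b x y * (G x - G y) * (ln (G x) - ln (G y))) \<le> b x y * (sqrtG x - sqrtG y)^2"
proof (cases "0 < b x y")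
  case True
  then have "0 < b y x" using b_sym by simp
  then have "(G x - G y) * (ln (G x) - ln (G y)) \<le> 4 / E * (sqrtG x - sqrtG y)^2"
    unfolding sqrtG_def
    using diff_mult_ln_diff_le_sqrt_diff_sq[OF G_pos G_pos E_pos] harnack True by blast
  then have "E / 4 * ((G x - G y) * (ln (G x) - ln (G y))) \<le> (sqrtG x - sqrtG y)^2"
    using E_pos by (simp add: field_simps)
  then show ?thesis using b_nonneg[of x y] mult_left_mono by (fastforce simp: algebra_simps)
next
  case False
  then show ?thesis using b_nonneg[of x y] by simp
qed

definition cutoff :: "real \<Rightarrow> 'a \<Rightarrow> real" where
  "cutoff T x = max 0 (min 1 ((ln (G x) + 2 * T) / T))"

lemma cutoff_nonneg: "0 \<le> cutoff T x" and cutoff_le_1: "cutoff T x \<le> 1"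
  by (auto simp: cutoff_def)

lemma mem_level_if_cutoff_neq_0:
  assumes "0 < T" "cutoff T x \<noteq> 0"
  shows "x \<in> level (exp (- 2 * T))"
proof -
  have "0 < (ln (G x) + 2 * T) / T" using assms(2) by (auto simp: cutoff_def)
  then have "- 2 * T < ln (G x)" using assms(1) by (simp add: zero_less_divide_iff)
  then have "exp (- 2 * T) < G x" using G_pos[of x] by (metis exp_less_mono exp_ln)
  then show ?thesis by (simp add: level_def)
qed

lemma cutoff_eq_1:
  assumes "0 < T" "x \<in> level (exp (- T))"
  shows "cutoff T x = 1"
proof -
  have "- T \<le> ln (G x)" using assms(2) G_pos[of x] by (simp add: level_def ln_ge_iff)
  then have "1 \<le> (ln (G x) + 2 * T) / T" using assms(1) by (simp add: field_simps)
  then show ?thesis by (simp add: cutoff_def)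
qed

lemma cutoff_diff_le:
  assumes "0 < T"
  shows "\<bar>cutoff T x - cutoff T y\<bar> \<le> \<bar>ln (G x) - ln (G y)\<bar> / T"
proof -
  have "\<bar>cutoff T x - cutoff T y\<bar> \<le> \<bar>(ln (G x) + 2 * T) / T - (ln (G y) + 2 * T) / T\<bar>"
    unfolding cutoff_def by (rule abs_clamp_diff_le)
  also have "\<dots> = \<bar>ln (G x) - ln (G y)\<bar> / T"
    using assms by (simp add: diff_divide_distrib[symmetric])
  finally show ?thesis .
qed

lemma mem_level_if_cutoff_jumps:
  assumes "0 < T" "cutoff T x \<noteq> cutoff T y" "0 < b x y"
  shows "x \<in> level (E * exp (- 2 * T))" "y \<in> level (E * exp (- 2 * T))"
proof -
  have harnack_xy: "E * G y \<le> G x" "E * G x \<le> G y"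
    using harnack assms(3) b_sym[of x y] by auto
  have E1: "E * exp (- 2 * T) \<le> exp (- 2 * T)" using E_le_1[OF assms(3)] by simp
  have "cutoff T x \<noteq> 0 \<or> cutoff T y \<noteq> 0" using assms(2) by auto
  then have "exp (- 2 * T) \<le> G x \<or> exp (- 2 * T) \<le> G y"
    using mem_level_if_cutoff_neq_0[OF assms(1)] by (auto simp: level_def)
  then have "E * exp (- 2 * T) \<le> G x \<and> E * exp (- 2 * T) \<le> G y"
  proof
    assume "exp (- 2 * T) \<le> G x"
    moreover from this have "E * exp (- 2 * T) \<le> E * G x" using E_pos by simp
    ultimately show ?thesis using harnack_xy E1 by linarith
  next
    assume "exp (- 2 * T) \<le> G y"
    moreover from this have "E * exp (- 2 * T) \<le> E * G y" using E_pos by simp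
    ultimately show ?thesis using harnack_xy E1 by linarith
  qed
  then show "x \<in> level (E * exp (- 2 * T))" "y \<in> level (E * exp (- 2 * T))"
    by (auto simp: level_def)
qed

definition cutoff_mass :: "real \<Rightarrow> real" where
  "cutoff_mass T = (\<Sum>x\<in>level (exp (- 2 * T)). W x * (cutoff T x)^2)"

definition cutoff_remainder :: "real \<Rightarrow> real" where
  "cutoff_remainder T = (\<Sum>x\<in>closed_nbhd (level (exp (- 2 * T))). \<Sum>y\<in>closed_nbhd (level (exp (- 2 * T))).
     b x y * (sqrtG x * sqrtG y) * (cutoff T x - cutoff T y)^2)"

lemma energy_sqrtG_cutoff:
  assumes "0 < T" "finite (level (exp (- 2 * T)))"
  shows "energy b (\<lambda>x. sqrtG x * cutoff T x) = cutoff_mass T + cutoff_remainder T"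
  unfolding cutoff_mass_def cutoff_remainder_def
  using assms by (intro ground_state_representation mem_level_if_cutoff_neq_0)

lemma cutoff_mass_ge:
  assumes T: "0 < T" "exp (- T) \<le> G x0" and fin: "finite (level (exp (- 2 * T)))"
  shows "E / 2 * (T + ln (G x0) + ln E) \<le> cutoff_mass T"
proof -
  let ?A = "level (exp (- T))" and ?S = "level (exp (- 2 * T))"
  have "exp (- 2 * T) \<le> exp (- T)" using T(1) by simp
  then have AS: "?A \<subseteq> ?S" unfolding level_def by (blast intro: order_trans)
  then have finA: "finite ?A" using fin finite_subset by blast
  have "2 * (ln (G x0) - ln (exp (- T) / E)) \<le> log_energy ?A"
    using T finA by (intro log_energy_level_bounds(1)) auto
  moreover have "ln (exp (- T) / E) = - T - ln E" using E_pos by (simp add: ln_div)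
  ultimately have "E / 4 * (2 * (T + ln (G x0) + ln E)) \<le> E / 4 * log_energy ?A"
    using E_pos by (intro mult_left_mono) auto
  then have "E / 2 * (T + ln (G x0) + ln E) \<le> E / 4 * log_energy ?A" by (simp add: algebra_simps)
  also have "\<dots> = (\<Sum>x\<in>?A. \<Sum>y\<in>?A. E / 4 * (b x y * (G x - G y) * (ln (G x) - ln (G y))))"
    unfolding log_energy_def by (simp add: sum_distrib_left)
  also have "\<dots> \<le> (\<Sum>x\<in>?A. \<Sum>y\<in>nbrs x. b x y * (sqrtG x - sqrtG y)^2)"
  proof (intro sum_mono)
    fix x
    have "(\<Sum>y\<in>?A. E / 4 * (b x y * (G x - G y) * (ln (G x) - ln (G y))))
        \<le> (\<Sum>y\<in>?A. b x y * (sqrtG x - sqrtG y)^2)"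
      by (intro sum_mono log_edge_le_sqrt_edge)
    also have "\<dots> = (\<Sum>y\<in>?A \<inter> nbrs x. b x y * (sqrtG x - sqrtG y)^2)"
      by (rule sum.mono_neutral_right) (use finA b_eq_0_if_not_nbr in auto)
    also have "\<dots> \<le> (\<Sum>y\<in>nbrs x. b x y * (sqrtG x - sqrtG y)^2)"
      by (rule sum_mono2[OF finite_nbrs]) (auto intro: mult_nonneg_nonneg b_nonneg)
    finally show "(\<Sum>y\<in>?A. E / 4 * (b x y * (G x - G y) * (ln (G x) - ln (G y))))
        \<le> (\<Sum>y\<in>nbrs x. b x y * (sqrtG x - sqrtG y)^2)" .
  qed
  also have "\<dots> \<le> (\<Sum>x\<in>?A. W x * (cutoff T x)^2)"
    using cutoff_eq_1[OF T(1)] W_eq delta_nonneg by (intro sum_mono) simp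
  also have "\<dots> \<le> cutoff_mass T"
    unfolding cutoff_mass_def using W_nonneg by (intro sum_mono2[OF fin AS]) simp
  finally show ?thesis .
qed

lemma cutoff_jump_le_log_edge:
  assumes "0 < T" "0 < b x y"
  shows "b x y * (sqrtG x * sqrtG y) * (cutoff T x - cutoff T y)^2
    \<le> 1 / (E * T^2) * (b x y * (G x - G y) * (ln (G x) - ln (G y)))"
proof -
  have "(cutoff T x - cutoff T y)^2 \<le> (\<bar>ln (G x) - ln (G y)\<bar> / T)^2"
    using cutoff_diff_le[OF assms(1), of x y] by (metis abs_ge_zero power2_abs power_mono)
  then have "(cutoff T x - cutoff T y)^2 \<le> (ln (G x) - ln (G y))^2 / T^2"
    by (simp add: power_divide)
  then have "b x y * (sqrtG x * sqrtG y) * (cutoff T x - cutoff T y)^2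
      \<le> b x y / T^2 * (sqrt (G x * G y) * (ln (G x) - ln (G y))^2)"
    using b_nonneg[of x y] sqrtG_pos[of x] sqrtG_pos[of y]
    by (auto simp: sqrtG_def real_sqrt_mult intro: order_trans[OF mult_left_mono])
  also have "\<dots> \<le> b x y / T^2 * (1 / E * ((G x - G y) * (ln (G x) - ln (G y))))"
    using assms(2) b_sym[of x y] harnack
    by (intro mult_left_mono sqrt_mult_ln_diff_sq_le G_pos E_pos) auto
  finally show ?thesis by (simp add: field_simps)
qed

lemma cutoff_remainder_le:
  assumes T: "0 < T" "E * exp (- 2 * T) \<le> G x0"
    and fin: "finite (level (exp (- 2 * T)))" "finite (level (E * exp (- 2 * T)))"
  shows "cutoff_remainder T \<le> 2 / (E * T^2) * (ln (G x0) - ln E + 2 * T)"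
proof -
  let ?B = "level (E * exp (- 2 * T))" and ?N = "closed_nbhd (level (exp (- 2 * T)))"
  define g where "g x y = (if x \<in> ?B \<and> y \<in> ?B then
      1 / (E * T^2) * (b x y * (G x - G y) * (ln (G x) - ln (G y))) else 0)" for x y
  have g_nonneg: "0 \<le> g x y" for x y unfolding g_def using E_pos log_edge_nonneg by simp
  have finN: "finite ?N" using finite_closed_nbhd[OF fin(1)] .
  have "cutoff_remainder T \<le> (\<Sum>x\<in>?N. \<Sum>y\<in>?N. g x y)"
    unfolding cutoff_remainder_def
  proof (intro sum_mono)
    fix x y
    show "b x y * (sqrtG x * sqrtG y) * (cutoff T x - cutoff T y)^2 \<le> g x y"
    proof (cases "0 < b x y \<and> cutoff T x \<noteq> cutoff T y")
      case True
      then have "x \<in> ?B" "y \<in> ?B" using mem_level_if_cutoff_jumps[OF T(1)] by auto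
      then show ?thesis unfolding g_def using cutoff_jump_le_log_edge[OF T(1)] True by simp
    next
      case False
      then show ?thesis using g_nonneg[of x y] b_nonneg[of x y] by auto
    qed
  qed
  also have "\<dots> \<le> (\<Sum>x\<in>?N \<union> ?B. \<Sum>y\<in>?N \<union> ?B. g x y)"
    using finN fin(2) g_nonneg by (intro sum_mono2 sum_nonneg order_trans[OF sum_mono sum_mono2]) auto
  also have "\<dots> = (\<Sum>x\<in>?B. \<Sum>y\<in>?N \<union> ?B. g x y)"
    by (rule sum.mono_neutral_right) (use finN fin(2) in \<open>auto simp: g_def\<close>)
  also have "\<dots> = (\<Sum>x\<in>?B. \<Sum>y\<in>?B. g x y)"
    by (intro sum.cong refl sum.mono_neutral_right) (use finN fin(2) in \<open>auto simp: g_def\<close>)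
  also have "\<dots> = 1 / (E * T^2) * log_energy ?B"
    unfolding log_energy_def g_def by (simp add: sum_distrib_left)
  also have "\<dots> \<le> 1 / (E * T^2) * (2 * (ln (G x0) - ln (E * exp (- 2 * T))))"
    using log_energy_level_bounds(2)[OF _ T(2) fin(2)] E_pos by (intro mult_left_mono) auto
  also have "\<dots> = 2 / (E * T^2) * (ln (G x0) - ln E + 2 * T)"
    using E_pos by (simp add: ln_mult add_divide_distrib diff_divide_distrib algebra_simps)
  finally show ?thesis .
qed

lemma cutoff_excess_le_weight:
  assumes "0 < lam" "0 \<le> w x" "x \<notin> K \<Longrightarrow> (1 + lam) * wG b x0 x \<le> w x"
  shows "(1 + lam) * (W x * (cutoff T x)^2) - (1 + lam) * (if x \<in> K then W x else 0)
    \<le> w x * (sqrtG x * cutoff T x)^2"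
proof (cases "x \<in> K")
  case True
  have "W x * (cutoff T x)^2 \<le> W x"
    using W_nonneg[of x] cutoff_nonneg[of T x] cutoff_le_1[of T x]
    by (intro mult_left_le) (auto simp: power_le_one)
  then have "(1 + lam) * (W x * (cutoff T x)^2) \<le> (1 + lam) * W x"
    using assms(1) by (intro mult_left_mono) auto
  moreover have "0 \<le> w x * (sqrtG x * cutoff T x)^2" using assms(2) by simp
  ultimately show ?thesis using True by simp
next
  case False
  have "(1 + lam) * (W x * (cutoff T x)^2) = (1 + lam) * wG b x0 x * (G x * (cutoff T x)^2)"
    unfolding wG_mult_G[symmetric] by (simp add: algebra_simps)
  also have "\<dots> \<le> w x * (G x * (cutoff T x)^2)"
    using assms(3)[OF False] G_nonneg[of x] by (intro mult_right_mono) auto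
  also have "\<dots> = w x * (sqrtG x * cutoff T x)^2"
    by (simp add: power_mult_distrib sqrtG_def G_nonneg)
  finally show ?thesis using False by simp
qed

lemma hardy_weight_cutoff_bound:
  assumes hardy: "hardy_weight b w" and "0 < lam"
    and w_ge: "\<And>x. x \<notin> K \<Longrightarrow> (1 + lam) * wG b x0 x \<le> w x" and "finite K"
    and T: "0 < T" "finite (level (exp (- 2 * T)))"
  shows "lam * cutoff_mass T \<le> (1 + lam) * (\<Sum>x\<in>K. W x) + cutoff_remainder T"
proof -
  let ?S = "level (exp (- 2 * T))"
  define f where "f x = sqrtG x * cutoff T x" for x
  have supp: "x \<in> ?S" if "f x \<noteq> 0" for x
    using that mem_level_if_cutoff_neq_0[OF T(1)] unfolding f_def by auto
  have "fin_supp f" unfolding fin_supp_def using T(2) supp by (auto intro: finite_subset)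
  then have "(\<Sum>\<^sub>\<infinity>x. w x * (f x)^2) \<le> energy b f" using hardy by (simp add: hardy_weight_def)
  moreover have "(\<Sum>\<^sub>\<infinity>x. w x * (f x)^2) = (\<Sum>x\<in>?S. w x * (f x)^2)"
    by (rule infsum_finite_support[OF T(2)]) (use supp in auto)
  moreover have "energy b f = cutoff_mass T + cutoff_remainder T"
    unfolding f_def by (rule energy_sqrtG_cutoff[OF T])
  moreover have "(\<Sum>x\<in>?S. (1 + lam) * (W x * (cutoff T x)^2) - (1 + lam) * (if x \<in> K then W x else 0))
      \<le> (\<Sum>x\<in>?S. w x * (f x)^2)"
    unfolding f_def using hardy w_ge \<open>0 < lam\<close>
    by (intro sum_mono cutoff_excess_le_weight) (auto simp: hardy_weight_def)
  then have "(1 + lam) * cutoff_mass T - (1 + lam) * (\<Sum>x\<in>?S. if x \<in> K then W x else 0)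
      \<le> (\<Sum>x\<in>?S. w x * (f x)^2)"
    unfolding cutoff_mass_def by (simp add: sum_subtractf sum_distrib_left)
  moreover have "(\<Sum>x\<in>?S. if x \<in> K then W x else 0) \<le> (\<Sum>x\<in>K. W x)"
    unfolding sum.inter_restrict[OF T(2), symmetric]
    using \<open>finite K\<close> W_nonneg by (intro sum_mono2) auto
  then have "(1 + lam) * (\<Sum>x\<in>?S. if x \<in> K then W x else 0) \<le> (1 + lam) * (\<Sum>x\<in>K. W x)"
    using \<open>0 < lam\<close> by (intro mult_left_mono) auto
  moreover have "(1 + lam) * cutoff_mass T = cutoff_mass T + lam * cutoff_mass T"
    by (simp add: algebra_simps)
  ultimately show ?thesis by linarith
qed

lemma hardy_weight_cutoff_growth_bound:
  assumes proper: "green_proper b x0" and hardy: "hardy_weight b w" and "0 < lam"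
    and w_ge: "\<And>x. x \<notin> K \<Longrightarrow> (1 + lam) * wG b x0 x \<le> w x" and "finite K"
    and T: "1 \<le> T" "- ln (G x0) \<le> T" "ln E - ln (G x0) \<le> 2 * T"
  shows "lam * (E / 2 * (T + ln (G x0) + ln E))
    \<le> (1 + lam) * (\<Sum>x\<in>K. W x) + 2 / E * (\<bar>ln (G x0) - ln E\<bar> + 2)"
proof -
  have fin: "finite (level (exp (- 2 * T)))" "finite (level (E * exp (- 2 * T)))"
    using finite_level[OF proper] E_pos by auto
  have "exp (- T) \<le> exp (ln (G x0))" "exp (ln E - 2 * T) \<le> exp (ln (G x0))" using T(2,3) by simp_all
  then have levels: "exp (- T) \<le> G x0" "E * exp (- 2 * T) \<le> G x0"
    using E_pos G_pos[of x0] by (simp_all add: exp_diff exp_minus field_simps)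
  have "lam * (E / 2 * (T + ln (G x0) + ln E)) \<le> lam * cutoff_mass T"
    using \<open>0 < lam\<close> T(1) fin(1) levels(1) by (intro mult_left_mono cutoff_mass_ge) auto
  also have "\<dots> \<le> (1 + lam) * (\<Sum>x\<in>K. W x) + cutoff_remainder T"
    using T(1) fin(1) by (intro hardy_weight_cutoff_bound[OF hardy \<open>0 < lam\<close> w_ge \<open>finite K\<close>]) auto
  also have "cutoff_remainder T \<le> 2 / E * ((ln (G x0) - ln E + 2 * T) / T^2)"
    using cutoff_remainder_le[of T] T(1) fin levels(2) by (simp add: field_simps)
  also have "\<dots> \<le> 2 / E * (\<bar>ln (G x0) - ln E\<bar> + 2)"
    using E_pos T(1) by (intro mult_left_mono add_mult_div_square_le) auto
  finally show ?thesis by simp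
qed

lemma not_hardy_weight:
  assumes proper: "green_proper b x0" and "0 < lam" and "finite K"
    and w_ge: "\<And>x. x \<notin> K \<Longrightarrow> (1 + lam) * wG b x0 x \<le> w x"
  shows "\<not> hardy_weight b w"
proof
  assume hardy: "hardy_weight b w"
  define B where "B = (1 + lam) * (\<Sum>x\<in>K. W x) + 2 / E * (\<bar>ln (G x0) - ln E\<bar> + 2)"
  define T where "T = max (max 1 (- ln (G x0)))
    (max ((ln E - ln (G x0)) / 2) (B / (lam * E / 2) - ln (G x0) - ln E + 1))"
  have T: "1 \<le> T" "- ln (G x0) \<le> T" "(ln E - ln (G x0)) / 2 \<le> T"
    "B / (lam * E / 2) - ln (G x0) - ln E + 1 \<le> T"
    unfolding T_def by (simp_all only: max.coboundedI1 max.coboundedI2 order_refl)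
  have upper: "lam * (E / 2 * (T + ln (G x0) + ln E)) \<le> B"
    unfolding B_def using T
    by (intro hardy_weight_cutoff_growth_bound[OF proper hardy \<open>0 < lam\<close> w_ge \<open>finite K\<close>]) auto
  have "lam * E / 2 * (B / (lam * E / 2) + 1) \<le> lam * E / 2 * (T + ln (G x0) + ln E)"
    using T(4) \<open>0 < lam\<close> E_pos by (intro mult_left_mono) auto
  moreover have "lam * E / 2 * (B / (lam * E / 2) + 1) = B + lam * E / 2"
    using \<open>0 < lam\<close> E_pos by (simp add: distrib_left)
  moreover have "lam * E / 2 * (T + ln (G x0) + ln E) = lam * (E / 2 * (T + ln (G x0) + ln E))"
    by simp
  moreover have "0 < lam * E" using \<open>0 < lam\<close> E_pos by simp
  ultimately show False using upper by linarith
qed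

end

theorem mainTheorem1:
  fixes b :: "'a::countable \<Rightarrow> 'a \<Rightarrow> real" and E C p lam :: real
    and x0 :: 'a and \<rho> :: "'a \<Rightarrow> 'a \<Rightarrow> real" and w :: "'a \<Rightarrow> real" and K :: "'a set"
  assumes "graph b" and "connected_graph b" and "transient b"
    and "E > 0" and "ellipticity b E"
    and "green_proper b x0"
    and "is_metric \<rho>"
    and "C > 0" and "p > 0"
    and "\<forall>x. wG b x0 x \<le> C / (1 + \<rho> x x0 powr p)"
    and "\<forall>x. w x > 0"
    and "lam > 0" and "finite K"
    and "\<forall>x. x \<notin> K \<longrightarrow> w x \<ge> (1 + lam) * (C / (1 + \<rho> x x0 powr p))"
  shows "\<not> hardy_weight b w"
proof -
  interpret transient_graph b E x0
    by unfold_locales (use assms in auto)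
  have "(1 + lam) * wG b x0 x \<le> w x" if "x \<notin> K" for x
  proof -
    have "(1 + lam) * wG b x0 x \<le> (1 + lam) * (C / (1 + \<rho> x x0 powr p))"
      using assms(10,12) by (intro mult_left_mono) auto
    also have "\<dots> \<le> w x" using assms(14) that by blast
    finally show ?thesis .
  qed
  then show ?thesis using not_hardy_weight assms(6,12,13) by blast
qed

end
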